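(* Let $(E,\tau)$ be a locally solid vector lattice, where $\tau$ is an o-Lebesgue topology. The following are equivalent: (1) $C_\tau=E$; (2) $E$ has the countable sup property; (3) every $\tau$-convergent net in $E$ has an embedded sequence that is uo-convergent to the same limit; (4) every increasing $\tau$-convergent net in $E^+$ has an embedded sequence that is uo-convergent to the same limit.
   Context: All vector lattices are real and Archimedean; linear topologies are Hausdorff. A locally solid topology on a vector lattice is a linear topology such that zero has a neighbourhood basis of solid sets. A net $(x_\alpha)$ order converges to $x$ if there is a net $y_\beta\downarrow0$ such that for each $\beta_0$ eventually $|x_\alpha-x|\leq y_{\beta_0}$; it uo-converges to $x$ if $|x_\alpha-x|\wedge|y|$ order converges to $0$ for every $y\in E$. An o-Lebesgue topology is a locally solid topology in which every order convergent net converges topologically to the same limit. A sequence $(V_n)$ of neighbourhoods of zero is normal if $V_{n+1}+V_{n+1}\subseteq V_n$; the carrier $C_\tau$ is the union of the disjoint complements $N^{\mathrm d}$ where $N=\bigcap_nV_n$ ranges over intersections of normal sequences of solid $\tau$-neighbourhoods of zero. $E$ has the countable sup property if every subset with a supremum contains an at most countable subset with the same supremum. Embedded sequence: given a net $(x_\alpha)_{\alpha\in A}$, a sequence $(x_{\alpha_n})_{n\geq1}$ with $\alpha_1\leq\alpha_2\leq\dotsb$, strictly increasing when $A$ has no largest element. *)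

theory Defs
  imports "HOL-Analysis.Analysis"
begin

text \<open>Vector lattices are modelled as types of sort {ordered_real_vector, lattice};
  E is the whole type. Absolute value, sup/inf of subsets are spelled out.\<close>

definition vabs :: "'a::{ordered_real_vector,lattice} \<Rightarrow> 'a" where
  "vabs x = sup x (- x)"

definition archimedean_vl :: "'a::{ordered_real_vector,lattice} itself \<Rightarrow> bool" where
  "archimedean_vl _ \<longleftrightarrow>
     (\<forall>x y :: 'a. 0 \<le> x \<and> (\<forall>n::nat. real n *\<^sub>R x \<le> y) \<longrightarrow> x = 0)"

definition is_sup_of :: "'a::order set \<Rightarrow> 'a \<Rightarrow> bool" where
  "is_sup_of S m \<longleftrightarrow> (\<forall>s\<in>S. s \<le> m) \<and> (\<forall>m'. (\<forall>s\<in>S. s \<le> m') \<longrightarrow> m \<le> m')"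

definition is_inf_of :: "'a::order set \<Rightarrow> 'a \<Rightarrow> bool" where
  "is_inf_of S m \<longleftrightarrow> (\<forall>s\<in>S. m \<le> s) \<and> (\<forall>m'. (\<forall>s\<in>S. m' \<le> s) \<longrightarrow> m' \<le> m)"

definition solid :: "'a::{ordered_real_vector,lattice} set \<Rightarrow> bool" where
  "solid S \<longleftrightarrow> (\<forall>x y. y \<in> S \<and> vabs x \<le> vabs y \<longrightarrow> x \<in> S)"

definition linear_topology :: "'a::{ordered_real_vector,lattice} topology \<Rightarrow> bool" where
  "linear_topology \<tau> \<longleftrightarrow> topspace \<tau> = UNIV \<and> Hausdorff_space \<tau> \<and>
     continuous_map (prod_topology \<tau> \<tau>) \<tau> (\<lambda>(x, y). x + y) \<and>
     continuous_map (prod_topology euclideanreal \<tau>) \<tau> (\<lambda>(c, x). c *\<^sub>R x)"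

definition nbhd0 :: "'a::{ordered_real_vector,lattice} topology \<Rightarrow> 'a set \<Rightarrow> bool" where
  "nbhd0 \<tau> U \<longleftrightarrow> (\<exists>W. openin \<tau> W \<and> 0 \<in> W \<and> W \<subseteq> U)"

definition locally_solid :: "'a::{ordered_real_vector,lattice} topology \<Rightarrow> bool" where
  "locally_solid \<tau> \<longleftrightarrow> linear_topology \<tau> \<and>
     (\<forall>U. nbhd0 \<tau> U \<longrightarrow> (\<exists>V. nbhd0 \<tau> V \<and> solid V \<and> V \<subseteq> U))"

definition directed :: "'i set \<Rightarrow> ('i \<Rightarrow> 'i \<Rightarrow> bool) \<Rightarrow> bool" where
  "directed D le \<longleftrightarrow> D \<noteq> {} \<and> (\<forall>a\<in>D. le a a) \<and>
     (\<forall>a\<in>D. \<forall>b\<in>D. \<forall>c\<in>D. le a b \<and> le b c \<longrightarrow> le a c) \<and>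
     (\<forall>a\<in>D. \<forall>b\<in>D. \<exists>c\<in>D. le a c \<and> le b c)"

definition net_eventually :: "'i set \<Rightarrow> ('i \<Rightarrow> 'i \<Rightarrow> bool) \<Rightarrow> ('i \<Rightarrow> bool) \<Rightarrow> bool" where
  "net_eventually D le P \<longleftrightarrow> (\<exists>a0\<in>D. \<forall>a\<in>D. le a0 a \<longrightarrow> P a)"

definition net_tendsto ::
  "'a topology \<Rightarrow> 'i set \<Rightarrow> ('i \<Rightarrow> 'i \<Rightarrow> bool) \<Rightarrow> ('i \<Rightarrow> 'a) \<Rightarrow> 'a \<Rightarrow> bool" where
  "net_tendsto \<tau> D le x l \<longleftrightarrow>
     (\<forall>U. openin \<tau> U \<and> l \<in> U \<longrightarrow> net_eventually D le (\<lambda>a. x a \<in> U))"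

text \<open>Order convergence. The dominating net y_beta decreasing to 0 is indexed by a subset
  of the type 'a (every decreasing net can be reindexed by its range).\<close>
definition order_conv ::
  "'i set \<Rightarrow> ('i \<Rightarrow> 'i \<Rightarrow> bool) \<Rightarrow> ('i \<Rightarrow> 'a::{ordered_real_vector,lattice}) \<Rightarrow> 'a \<Rightarrow> bool" where
  "order_conv D le x l \<longleftrightarrow>
     (\<exists>(B :: 'a set) leB (y :: 'a \<Rightarrow> 'a).
        directed B leB \<and> (\<forall>b1\<in>B. \<forall>b2\<in>B. leB b1 b2 \<longrightarrow> y b2 \<le> y b1) \<and>
        is_inf_of (y ` B) 0 \<and>
        (\<forall>b\<in>B. net_eventually D le (\<lambda>a. vabs (x a - l) \<le> y b)))"

definition uo_conv ::
  "'i set \<Rightarrow> ('i \<Rightarrow> 'i \<Rightarrow> bool) \<Rightarrow> ('i \<Rightarrow> 'a::{ordered_real_vector,lattice}) \<Rightarrow> 'a \<Rightarrow> bool" where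
  "uo_conv D le x l \<longleftrightarrow>
     (\<forall>u. order_conv D le (\<lambda>a. inf (vabs (x a - l)) (vabs u)) 0)"

definition o_lebesgue :: "'i itself \<Rightarrow> 'a::{ordered_real_vector,lattice} topology \<Rightarrow> bool" where
  "o_lebesgue _ \<tau> \<longleftrightarrow> locally_solid \<tau> \<and>
     (\<forall>(D :: 'i set) le x l. directed D le \<and> order_conv D le x l \<longrightarrow> net_tendsto \<tau> D le x l)"

definition set_plus_vl :: "'a::plus set \<Rightarrow> 'a set \<Rightarrow> 'a set" where
  "set_plus_vl A B = {a + b | a b. a \<in> A \<and> b \<in> B}"

definition normal_solid_seq :: "'a::{ordered_real_vector,lattice} topology \<Rightarrow> (nat \<Rightarrow> 'a set) \<Rightarrow> bool" where
  "normal_solid_seq \<tau> V \<longleftrightarrow> (\<forall>n. nbhd0 \<tau> (V n) \<and> solid (V n) \<and>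
      set_plus_vl (V (Suc n)) (V (Suc n)) \<subseteq> V n)"

definition disj_compl :: "'a::{ordered_real_vector,lattice} set \<Rightarrow> 'a set" where
  "disj_compl N = {x. \<forall>y\<in>N. inf (vabs x) (vabs y) = 0}"

definition carrier_top :: "'a::{ordered_real_vector,lattice} topology \<Rightarrow> 'a set" where
  "carrier_top \<tau> = \<Union>{disj_compl (\<Inter>n. V n) | V. normal_solid_seq \<tau> V}"

definition countable_sup_property :: "'a::{ordered_real_vector,lattice} itself \<Rightarrow> bool" where
  "countable_sup_property _ \<longleftrightarrow>
     (\<forall>(S :: 'a set) m. is_sup_of S m \<longrightarrow> (\<exists>T\<subseteq>S. countable T \<and> is_sup_of T m))"

definition embedded_seq :: "'i set \<Rightarrow> ('i \<Rightarrow> 'i \<Rightarrow> bool) \<Rightarrow> (nat \<Rightarrow> 'i) \<Rightarrow> bool" where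
  "embedded_seq D le s \<longleftrightarrow> (\<forall>n. s n \<in> D \<and> le (s n) (s (Suc n))) \<and>
     ((\<not> (\<exists>m\<in>D. \<forall>a\<in>D. le a m)) \<longrightarrow> (\<forall>n. \<not> le (s (Suc n)) (s n)))"

end

theory Submission
  imports Defs "HOL-Library.Lattice_Algebras"
begin

(* The carrier C_tau is an ideal, and the o-Lebesgue property makes it order dense in E.
   Under the countable sup property, |x| is therefore the supremum of countably many
   elements of C_tau, and a diagonal normal sequence exhibits x as an element of C_tau.
   Conversely, if C_tau = E, the net of finite suprema of a set S with supremum m converges
   to m; choosing one finite subset for each member of a normal sequence V such that
   m - s0 is disjoint from the intersection of V yields a countable subset of S with
   supremum m. The same bookkeeping along a tau-convergent net produces an embedded
   sequence whose distances to the limit are uo-null, by an Archimedean argument, and (4)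
   gives the countable sup property through the increasing net of finite suprema. *)

section \<open>Vector lattices as lattice-ordered groups\<close>

(* The sort {ordered_real_vector, lattice} is not an instance of lattice_ab_group_add_abs,
   so the library's facts about lattice-ordered groups are obtained by interpreting the
   class locale, with vabs as the absolute value. *)
interpretation vl: lattice_ab_group_add_abs vabs "(+)" "0::'a::{ordered_real_vector,lattice}"
    "(-)" uminus "(\<le>)" "(<)" inf sup
  by unfold_locales (simp add: vabs_def)

(* As simp rules these rewrite differences of lattice terms into less usable forms. *)
declare vl.diff_inf_eq_sup [simp del] vl.diff_sup_eq_inf [simp del]
  vl.neg_inf_eq_sup [simp del] vl.neg_sup_eq_inf [simp del]

context lattice_ab_group_add
begin

lemma inf_eq_diff_sup_diff: "inf x y = x - sup (x - y) 0"
proof -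
  have "x - sup (x - y) 0 = x + inf (y - x) 0"
    by (simp add: diff_sup_eq_inf)
  also have "\<dots> = inf y x"
    using add_inf_distrib_left[of x "y - x" 0] by (simp add: algebra_simps)
  finally show ?thesis
    by (simp add: inf_commute)
qed

lemma inf_pos_part_neg_part: "inf (sup d 0) (sup (- d) 0) = 0"
proof -
  have "sup (- d) 0 = sup d 0 - d"
    using add_sup_distrib_right[of d 0 "- d"] by (simp add: sup_commute)
  then have "sup d 0 - sup (- d) 0 = d"
    by (simp only: diff_diff_eq2 add_diff_cancel_left')
  then show ?thesis
    using inf_eq_diff_sup_diff[of "sup d 0" "sup (- d) 0"] by simp
qed

lemma inf_add_le_add_inf:
  assumes "0 \<le> x" "0 \<le> y" "0 \<le> z"
  shows "inf x (y + z) \<le> inf x y + inf x z"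
proof -
  define r where "r = inf x (y + z)"
  have "r - y \<le> x"
    using add_increasing2[OF assms(2) inf_le1] by (simp add: r_def diff_le_eq)
  moreover have "r - y \<le> z"
    by (simp add: r_def diff_le_eq add.commute)
  ultimately have "r - y \<le> inf x z"
    by (rule le_infI)
  then have "r - inf x z \<le> y"
    by (metis diff_le_eq add.commute)
  moreover have "r \<le> x + inf x z"
    using add_increasing2[OF _ inf_le1] assms(1,3) by (simp add: r_def)
  then have "r - inf x z \<le> x"
    by (simp only: diff_le_eq)
  ultimately have "r - inf x z \<le> inf x y"
    by (intro le_infI)
  then have "r \<le> inf x y + inf x z"
    by (simp only: diff_le_eq)
  then show ?thesis
    by (simp add: r_def)
qed

lemma le_of_le_add_disjoint:
  assumes "0 \<le> x" "0 \<le> y" "0 \<le> e" "x \<le> y + e" "inf x e = 0"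
  shows "x \<le> y"
proof -
  have "x = inf x (y + e)"
    using assms(4) by (simp add: inf_absorb1)
  also have "\<dots> \<le> inf x y + inf x e"
    using assms(1-3) by (rule inf_add_le_add_inf)
  finally show ?thesis
    using assms(5) by simp
qed

end

lemma disjoint_scaleR_nat:
  fixes a b :: "'a::{ordered_real_vector,lattice}"
  assumes "0 \<le> a" "0 \<le> b" "inf a b = 0"
  shows "inf a (real k *\<^sub>R b) = 0"
proof (induction k)
  case 0
  then show ?case
    using assms(1) by (simp add: inf_absorb2)
next
  case (Suc k)
  have "inf a (real (Suc k) *\<^sub>R b) = inf a (b + real k *\<^sub>R b)"
    by (simp add: algebra_simps)
  also have "\<dots> \<le> inf a b + inf a (real k *\<^sub>R b)"
    using assms(1,2) by (intro vl.inf_add_le_add_inf) (simp_all add: scaleR_nonneg_nonneg)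
  also have "\<dots> = 0"
    using Suc.IH assms(3) by simp
  finally show ?case
    using assms(1,2) by (intro order.antisym) (simp_all add: scaleR_nonneg_nonneg)
qed

lemma archimedean_eq_0:
  fixes t w :: "'a::{ordered_real_vector,lattice}"
  assumes "archimedean_vl TYPE('a)" "0 \<le> t" "\<And>n. real n *\<^sub>R t \<le> w"
  shows "t = 0"
  using assms unfolding archimedean_vl_def by blast

lemma archimedean_inf_le_eq_0:
  fixes a r :: "'a::{ordered_real_vector,lattice}"
  assumes arch: "archimedean_vl TYPE('a)" and "0 \<le> a" "0 \<le> r"
    and le: "\<And>n::nat. inf (a + r) (real n *\<^sub>R r) \<le> a"
  shows "r = 0"
proof (rule archimedean_eq_0[OF arch \<open>0 \<le> r\<close>])
  fix n
  show "real n *\<^sub>R r \<le> a"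
  proof (induction n)
    case 0
    then show ?case
      using \<open>0 \<le> a\<close> by simp
  next
    case (Suc n)
    have "real (Suc n) *\<^sub>R r = inf a (real n *\<^sub>R r) + r"
      using Suc.IH by (simp add: inf_absorb2 algebra_simps)
    also have "\<dots> = inf (a + r) (real n *\<^sub>R r + r)"
      by (rule vl.add_inf_distrib_right)
    also have "\<dots> \<le> a"
      using le[of "Suc n"] by (simp add: algebra_simps)
    finally show ?case .
  qed
qed

(* Pointwise: where r > 0 we have z \<le> p - r, so inf z u \<le> u - (u - p + r); where r = 0
   the bound is u itself. *)
lemma inf_le_diff_inf_scaleR:
  fixes z u p r :: "'a::{ordered_real_vector,lattice}"
  assumes "0 \<le> z" "0 \<le> r" "p \<le> u" and r_le: "r \<le> p - inf p z"
  shows "inf z u \<le> u - inf (u - p + r) (real c *\<^sub>R r)"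
proof -
  define X where "X = inf (u - p + r) (real c *\<^sub>R r)"
  define Dp where "Dp = sup (p - z) 0"
  define Dm where "Dm = sup (z - p) 0"
  have "r \<le> Dp"
    using r_le vl.inf_eq_diff_sup_diff[of p z] by (simp add: Dp_def)
  have "inf Dp Dm = 0"
    using vl.inf_pos_part_neg_part[of "p - z"] by (simp add: Dp_def Dm_def)
  have "inf r Dm \<le> inf Dp Dm"
    using \<open>r \<le> Dp\<close> by (rule inf_mono) simp
  then have "inf r Dm \<le> 0"
    unfolding \<open>inf Dp Dm = 0\<close> .
  then have "inf r Dm = 0"
    using assms(2) by (intro order.antisym) (simp_all add: Dm_def)
  then have "inf (real c *\<^sub>R r) Dm = 0"
    using disjoint_scaleR_nat[of Dm r c] assms(2) by (simp add: Dm_def inf_commute)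
  then have "inf X Dm = 0"
    using assms(2,3) inf_mono[of X "real c *\<^sub>R r" Dm Dm]
    by (intro order.antisym) (simp_all add: X_def Dm_def scaleR_nonneg_nonneg)
  moreover have "X \<le> sup (u - z) 0 + Dm"
  proof -
    have "X \<le> u - p + Dp"
      using \<open>r \<le> Dp\<close> by (simp add: X_def le_infI1)
    also have "\<dots> = (u - z) + Dm"
      using vl.add_sup_distrib_left[of "u - p" "p - z" 0]
        vl.add_sup_distrib_left[of "u - z" "z - p" 0]
      by (simp add: Dp_def Dm_def algebra_simps) (rule sup_commute)
    also have "\<dots> \<le> sup (u - z) 0 + Dm"
      by simp
    finally show ?thesis .
  qed
  moreover have "0 \<le> X"
    using assms(2,3) by (simp add: X_def scaleR_nonneg_nonneg)
  ultimately have "X \<le> sup (u - z) 0"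
    using vl.le_of_le_add_disjoint[of X "sup (u - z) 0" Dm] by (simp add: Dm_def)
  then have "u - sup (u - z) 0 \<le> u - X"
    by (rule diff_left_mono)
  moreover have "inf z u = u - sup (u - z) 0"
    using vl.inf_eq_diff_sup_diff[of u z] by (simp only: inf_commute)
  ultimately show ?thesis
    by (simp only: X_def)
qed

lemma is_sup_of_if_gaps_vanish:
  fixes x :: "'j \<Rightarrow> 'a::{ordered_real_vector,lattice}"
  assumes "\<And>j. j \<in> J \<Longrightarrow> x j \<le> m"
    and "\<And>v. 0 \<le> v \<Longrightarrow> (\<And>j. j \<in> J \<Longrightarrow> x j + v \<le> m) \<Longrightarrow> v = 0"
  shows "is_sup_of (x ` J) m"
  unfolding is_sup_of_def
proof (intro conjI allI impI ballI)
  fix u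
  assume ub: "\<forall>s\<in>x ` J. s \<le> u"
  have "x j + (m - inf m u) \<le> m" if "j \<in> J" for j
    using assms(1)[OF that] ub that by (simp add: add.commute le_diff_eq[symmetric])
  then have "m - inf m u = 0"
    by (intro assms(2)) simp_all
  then show "m \<le> u"
    by (metis right_minus_eq le_iff_inf)
qed (use assms(1) in auto)

section \<open>Locally solid topologies and normal sequences\<close>

lemma o_lebesgue_locally_solid: "o_lebesgue TYPE('i) \<tau> \<Longrightarrow> locally_solid \<tau>"
  unfolding o_lebesgue_def by blast

lemma locally_solid_linear_topology: "locally_solid \<tau> \<Longrightarrow> linear_topology \<tau>"
  unfolding locally_solid_def by blast

lemma openin_translate:
  assumes lin: "linear_topology (\<tau>::'a::{ordered_real_vector,lattice} topology)"
    and "openin \<tau> U"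
  shows "openin \<tau> {x. x + c \<in> U}"
proof -
  have top: "topspace \<tau> = UNIV"
    using lin unfolding linear_topology_def by simp
  have "continuous_map \<tau> (prod_topology \<tau> \<tau>) (\<lambda>x. (x, c))"
    by (intro continuous_map_pairedI) (auto simp: top continuous_map_id[unfolded id_def])
  moreover have "continuous_map (prod_topology \<tau> \<tau>) \<tau> (\<lambda>(x, y). x + y)"
    using lin unfolding linear_topology_def by simp
  ultimately have "continuous_map \<tau> \<tau> ((\<lambda>(x, y). x + y) \<circ> (\<lambda>x. (x, c)))"
    by (rule continuous_map_compose)
  then have "continuous_map \<tau> \<tau> (\<lambda>x. x + c)"
    by (simp add: o_def)
  from openin_continuous_map_preimage[OF this \<open>openin \<tau> U\<close>] show ?thesis
    by (simp add: top)
qed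

lemma nbhd0_zero: "nbhd0 \<tau> U \<Longrightarrow> 0 \<in> U"
  unfolding nbhd0_def by blast

lemma nbhd0_Int: "nbhd0 \<tau> U \<Longrightarrow> nbhd0 \<tau> V \<Longrightarrow> nbhd0 \<tau> (U \<inter> V)"
  unfolding nbhd0_def by (meson Int_mono openin_Int IntI)

lemma nbhd0_UNIV: "linear_topology (\<tau>::'a::{ordered_real_vector,lattice} topology) \<Longrightarrow> nbhd0 \<tau> UNIV"
  unfolding nbhd0_def linear_topology_def by (metis openin_topspace UNIV_I subset_UNIV)

lemma nbhd0_not_mem:
  assumes "linear_topology (\<tau>::'a::{ordered_real_vector,lattice} topology)" and "w \<noteq> 0"
  shows "\<exists>U. nbhd0 \<tau> U \<and> w \<notin> U"
proof -
  have "Hausdorff_space \<tau>" "topspace \<tau> = UNIV"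
    using assms(1) unfolding linear_topology_def by auto
  then obtain U V where "openin \<tau> U" "openin \<tau> V" "0 \<in> U" "w \<in> V" "disjnt U V"
    using assms(2) unfolding Hausdorff_space_def by (metis UNIV_I)
  then show ?thesis
    unfolding nbhd0_def disjnt_def by blast
qed

lemma net_tendsto_eventually_diff_mem:
  assumes "linear_topology (\<tau>::'a::{ordered_real_vector,lattice} topology)"
    and "net_tendsto \<tau> D le x l" and "nbhd0 \<tau> U"
  shows "net_eventually D le (\<lambda>a. x a - l \<in> U)"
proof -
  obtain W where W: "openin \<tau> W" "0 \<in> W" "W \<subseteq> U"
    using assms(3) unfolding nbhd0_def by blast
  have "openin \<tau> {y. y - l \<in> W}"
    using openin_translate[OF assms(1) W(1), of "- l"] by simp
  moreover have "l \<in> {y. y - l \<in> W}"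
    using W(2) by simp
  ultimately have "net_eventually D le (\<lambda>a. x a \<in> {y. y - l \<in> W})"
    using assms(2) unfolding net_tendsto_def by blast
  then show ?thesis
    unfolding net_eventually_def using W(3) by auto
qed

lemma solidD: "solid S \<Longrightarrow> y \<in> S \<Longrightarrow> vabs x \<le> vabs y \<Longrightarrow> x \<in> S"
  unfolding solid_def by blast

lemma solid_vabs_iff:
  assumes "solid S"
  shows "vabs y \<in> S \<longleftrightarrow> y \<in> S"
  using solidD[OF assms, of "vabs y" y] solidD[OF assms, of y "vabs y"]
  by (auto simp only: vl.abs_idempotent order_refl)

lemma solid_uminus:
  assumes "solid S" "y \<in> S"
  shows "- y \<in> S"
  using solidD[OF assms, of "- y"] by (simp only: vl.abs_minus_cancel order_refl)

lemma solid_INT: "(\<And>i. i \<in> I \<Longrightarrow> solid (V i)) \<Longrightarrow> solid (\<Inter>i\<in>I. V i)"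
  unfolding solid_def by blast

lemma solid_Int: "solid U \<Longrightarrow> solid V \<Longrightarrow> solid (U \<inter> V)"
  unfolding solid_def by blast

lemma solid_UNIV: "solid UNIV"
  unfolding solid_def by blast

lemma solid_nbhd0_half:
  assumes ls: "locally_solid (\<tau>::'a::{ordered_real_vector,lattice} topology)" and "nbhd0 \<tau> U"
  shows "\<exists>W. nbhd0 \<tau> W \<and> solid W \<and> set_plus_vl W W \<subseteq> U"
proof -
  have lin: "linear_topology \<tau>"
    using ls by (rule locally_solid_linear_topology)
  have top: "topspace \<tau> = UNIV"
    using lin unfolding linear_topology_def by simp
  obtain W0 where W0: "openin \<tau> W0" "0 \<in> W0" "W0 \<subseteq> U"
    using assms(2) unfolding nbhd0_def by blast
  let ?S = "{p \<in> topspace (prod_topology \<tau> \<tau>). (\<lambda>(x, y). x + y) p \<in> W0}"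
  have "continuous_map (prod_topology \<tau> \<tau>) \<tau> (\<lambda>(x, y). x + y)"
    using lin unfolding linear_topology_def by simp
  from openin_continuous_map_preimage[OF this W0(1)]
  have "openin (prod_topology \<tau> \<tau>) ?S" .
  moreover have "(0, 0) \<in> ?S"
    using W0(2) by (simp add: top)
  ultimately have "\<exists>U1 U2. openin \<tau> U1 \<and> openin \<tau> U2 \<and> 0 \<in> U1 \<and> 0 \<in> U2 \<and> U1 \<times> U2 \<subseteq> ?S"
    by (subst (asm) openin_prod_topology_alt) blast
  then obtain U1 U2 where U12: "openin \<tau> U1" "openin \<tau> U2" "0 \<in> U1" "0 \<in> U2" "U1 \<times> U2 \<subseteq> ?S"
    by blast
  then have "nbhd0 \<tau> (U1 \<inter> U2)"
    unfolding nbhd0_def by blast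
  then obtain W where W: "nbhd0 \<tau> W" "solid W" "W \<subseteq> U1 \<inter> U2"
    using ls unfolding locally_solid_def by blast
  have "set_plus_vl W W \<subseteq> U"
  proof
    fix z
    assume "z \<in> set_plus_vl W W"
    then obtain a b where "z = a + b" "a \<in> W" "b \<in> W"
      unfolding set_plus_vl_def by blast
    then have "(a, b) \<in> ?S"
      using W(3) U12(5) by blast
    then show "z \<in> U"
      using \<open>z = a + b\<close> W0(3) by auto
  qed
  with W show ?thesis
    by blast
qed

lemma normal_solid_seq_exists:
  assumes "locally_solid (\<tau>::'a::{ordered_real_vector,lattice} topology)" and "nbhd0 \<tau> U"
  shows "\<exists>V. normal_solid_seq \<tau> V \<and> V 0 \<subseteq> U"
proof -
  have "\<exists>V. \<forall>n. (nbhd0 \<tau> (V n) \<and> solid (V n) \<and> (n = 0 \<longrightarrow> V n \<subseteq> U)) \<and>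
      set_plus_vl (V (Suc n)) (V (Suc n)) \<subseteq> V n"
  proof (rule dependent_nat_choice)
    show "\<exists>V0. nbhd0 \<tau> V0 \<and> solid V0 \<and> (0 = 0 \<longrightarrow> V0 \<subseteq> U)"
      using assms unfolding locally_solid_def by blast
  next
    fix W and n :: nat
    assume "nbhd0 \<tau> W \<and> solid W \<and> (n = 0 \<longrightarrow> W \<subseteq> U)"
    then show "\<exists>W'. (nbhd0 \<tau> W' \<and> solid W' \<and> (Suc n = 0 \<longrightarrow> W' \<subseteq> U)) \<and> set_plus_vl W' W' \<subseteq> W"
      using solid_nbhd0_half[OF assms(1)] by blast
  qed
  then show ?thesis
    unfolding normal_solid_seq_def by blast
qed

lemma normal_solid_seq_zero: "normal_solid_seq \<tau> V \<Longrightarrow> 0 \<in> V n"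
  unfolding normal_solid_seq_def using nbhd0_zero by blast

lemma normal_solid_seq_add:
  "normal_solid_seq \<tau> V \<Longrightarrow> x \<in> V (Suc n) \<Longrightarrow> y \<in> V (Suc n) \<Longrightarrow> x + y \<in> V n"
  unfolding normal_solid_seq_def set_plus_vl_def by blast

lemma normal_solid_seq_solid: "normal_solid_seq \<tau> V \<Longrightarrow> solid (V n)"
  unfolding normal_solid_seq_def by blast

lemma normal_solid_seq_nbhd0: "normal_solid_seq \<tau> V \<Longrightarrow> nbhd0 \<tau> (V n)"
  unfolding normal_solid_seq_def by blast

lemma normal_solid_seq_Suc_subset: "normal_solid_seq \<tau> V \<Longrightarrow> V (Suc n) \<subseteq> V n"
  using normal_solid_seq_add[of \<tau> V _ n 0] normal_solid_seq_zero by (metis add_0_right subsetI)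

lemma normal_solid_seq_antimono: "normal_solid_seq \<tau> V \<Longrightarrow> n \<le> m \<Longrightarrow> V m \<subseteq> V n"
  by (rule lift_Suc_antimono_le[of V]) (blast dest: normal_solid_seq_Suc_subset)

lemma normal_solid_seq_UNIV:
  "linear_topology (\<tau>::'a::{ordered_real_vector,lattice} topology) \<Longrightarrow> normal_solid_seq \<tau> (\<lambda>n. UNIV)"
  unfolding normal_solid_seq_def using nbhd0_UNIV solid_UNIV by blast

lemma normal_solid_seq_Int:
  assumes "normal_solid_seq \<tau> V" "normal_solid_seq \<tau> W"
  shows "normal_solid_seq \<tau> (\<lambda>n. V n \<inter> W n)"
  unfolding normal_solid_seq_def
proof (intro allI conjI)
  fix n
  show "nbhd0 \<tau> (V n \<inter> W n)"
    using assms by (intro nbhd0_Int normal_solid_seq_nbhd0)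
  show "solid (V n \<inter> W n)"
    using assms by (intro solid_Int normal_solid_seq_solid)
  show "set_plus_vl (V (Suc n) \<inter> W (Suc n)) (V (Suc n) \<inter> W (Suc n)) \<subseteq> V n \<inter> W n"
    using normal_solid_seq_add[OF assms(1)] normal_solid_seq_add[OF assms(2)]
    unfolding set_plus_vl_def by blast
qed

lemma normal_solid_seq_INT_atMost:
  fixes V :: "nat \<Rightarrow> nat \<Rightarrow> 'a::{ordered_real_vector,lattice} set" and n :: nat
  assumes "\<And>k. normal_solid_seq \<tau> (V k)"
  shows "normal_solid_seq \<tau> (\<lambda>i. \<Inter>k\<le>n. V k i)"
proof (induction n)
  case 0
  then show ?case
    using assms by simp
next
  case (Suc n)
  have "(\<lambda>i. \<Inter>k\<le>Suc n. V k i) = (\<lambda>i. V (Suc n) i \<inter> (\<Inter>k\<le>n. V k i))"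
    by (simp add: atMost_Suc)
  then show ?case
    using normal_solid_seq_Int[OF assms Suc.IH] by simp
qed

lemma normal_solid_seq_diagonal:
  assumes G: "\<And>n. normal_solid_seq \<tau> (G n)" and dec: "\<And>n i. G (Suc n) i \<subseteq> G n i"
  shows "normal_solid_seq \<tau> (\<lambda>n. G n (Suc n))" and "(\<Inter>n. G n (Suc n)) \<subseteq> (\<Inter>i. G k i)"
proof -
  show "normal_solid_seq \<tau> (\<lambda>n. G n (Suc n))"
    unfolding normal_solid_seq_def
  proof (intro allI conjI)
    fix n
    show "nbhd0 \<tau> (G n (Suc n))" "solid (G n (Suc n))"
      using G normal_solid_seq_nbhd0 normal_solid_seq_solid by blast+
    have "set_plus_vl (G (Suc n) (Suc (Suc n))) (G (Suc n) (Suc (Suc n))) \<subseteq> G (Suc n) (Suc n)"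
      using G unfolding normal_solid_seq_def by blast
    with dec show "set_plus_vl (G (Suc n) (Suc (Suc n))) (G (Suc n) (Suc (Suc n))) \<subseteq> G n (Suc n)"
      by blast
  qed
  have "y \<in> G k i" if y: "y \<in> (\<Inter>n. G n (Suc n))" for y i
  proof -
    define M where "M = max k i"
    have "y \<in> G M (Suc M)"
      using y by blast
    also have "\<dots> \<subseteq> G k (Suc M)"
      using lift_Suc_antimono_le[of "\<lambda>n. G n (Suc M)" k M] dec by (simp add: M_def)
    also have "\<dots> \<subseteq> G k i"
      using normal_solid_seq_antimono[OF G] by (simp add: M_def)
    finally show ?thesis .
  qed
  then show "(\<Inter>n. G n (Suc n)) \<subseteq> (\<Inter>i. G k i)"
    by blast
qed

lemma normal_solid_seq_sum_tail:
  assumes V: "normal_solid_seq \<tau> V" and z: "\<And>n. z n \<in> V n"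
  shows "(\<Sum>i<d. z (Suc k + i)) \<in> V k"
proof (induction d arbitrary: k)
  case 0
  then show ?case
    using normal_solid_seq_zero[OF V] by simp
next
  case (Suc d)
  have "(\<Sum>i<Suc d. z (Suc k + i)) = z (Suc k) + (\<Sum>i<d. z (Suc (Suc k) + i))"
    by (subst sum.lessThan_Suc_shift) simp
  then show ?case
    using normal_solid_seq_add[OF V z Suc.IH] by simp
qed

lemma net_tendsto_limit_mem:
  assumes lin: "linear_topology (\<tau>::'a::{ordered_real_vector,lattice} topology)"
    and D: "directed D le" and x: "net_tendsto \<tau> D le x w"
    and V: "normal_solid_seq \<tau> V" and mem: "\<And>a. a \<in> D \<Longrightarrow> x a \<in> V (Suc n)"
  shows "w \<in> V n"
proof -
  obtain a0 where a0: "a0 \<in> D" "\<And>a. a \<in> D \<Longrightarrow> le a0 a \<Longrightarrow> x a - w \<in> V (Suc n)"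
    using net_tendsto_eventually_diff_mem[OF lin x normal_solid_seq_nbhd0[OF V]]
    unfolding net_eventually_def by blast
  have "le a0 a0"
    using D a0(1) unfolding directed_def by blast
  then have "- (x a0 - w) \<in> V (Suc n)"
    using a0 normal_solid_seq_solid[OF V] by (blast intro: solid_uminus)
  from normal_solid_seq_add[OF V mem[OF a0(1)] this] show ?thesis
    by simp
qed

section \<open>Ideals, disjoint complements and the carrier\<close>

definition ideal_vl :: "'a::{ordered_real_vector,lattice} set \<Rightarrow> bool" where
  "ideal_vl I \<longleftrightarrow> 0 \<in> I \<and> solid I \<and> (\<forall>x\<in>I. \<forall>y\<in>I. x + y \<in> I)"

lemma ideal_vl_scaleR_nat:
  assumes "ideal_vl I" "t \<in> I"
  shows "real k *\<^sub>R t \<in> I"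
proof (induction k)
  case 0
  then show ?case
    using assms(1) unfolding ideal_vl_def by simp
next
  case (Suc k)
  have "real (Suc k) *\<^sub>R t = t + real k *\<^sub>R t"
    by (simp add: algebra_simps)
  then show ?case
    using Suc assms unfolding ideal_vl_def by metis
qed

lemma ideal_vl_sup:
  assumes "ideal_vl I" "a \<in> I" "b \<in> I" "0 \<le> a" "0 \<le> b"
  shows "sup a b \<in> I"
proof -
  have "sup a b \<le> a + b"
    using assms(4,5) by (simp add: add_increasing add_increasing2)
  moreover have "0 \<le> sup a b"
    using assms(4) by (simp add: le_supI1)
  ultimately have "vabs (sup a b) \<le> vabs (a + b)"
    using assms(4,5) by (simp add: vl.abs_of_nonneg)
  moreover have "a + b \<in> I" "solid I"
    using assms(1-3) unfolding ideal_vl_def by blast+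
  ultimately show ?thesis
    using solidD by blast
qed

lemma normal_solid_seq_Inter_ideal:
  assumes "normal_solid_seq \<tau> V"
  shows "ideal_vl (\<Inter>n. V n)"
  unfolding ideal_vl_def
proof (intro conjI ballI)
  show "0 \<in> (\<Inter>n. V n)"
    using normal_solid_seq_zero[OF assms] by blast
  show "solid (\<Inter>n. V n)"
    using normal_solid_seq_solid[OF assms] by (rule solid_INT)
  show "x + y \<in> (\<Inter>n. V n)" if "x \<in> (\<Inter>n. V n)" "y \<in> (\<Inter>n. V n)" for x y
    using that normal_solid_seq_add[OF assms] by blast
qed

lemma ideal_le_gap_eq_0:
  fixes I :: "'a::{ordered_real_vector,lattice} set"
  assumes arch: "archimedean_vl TYPE('a)" and I: "ideal_vl I" and "0 \<le> w"
    and gap: "\<And>a. a \<in> I \<Longrightarrow> 0 \<le> a \<Longrightarrow> a \<le> w \<Longrightarrow> a + v \<le> w"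
    and t: "t \<in> I" "0 \<le> t" "t \<le> v"
  shows "t = 0"
proof (rule archimedean_eq_0[OF arch t(2)])
  fix n
  show "real n *\<^sub>R t \<le> w"
  proof (induction n)
    case 0
    then show ?case
      using \<open>0 \<le> w\<close> by simp
  next
    case (Suc n)
    have "real (Suc n) *\<^sub>R t = real n *\<^sub>R t + t"
      by (simp add: algebra_simps)
    also have "\<dots> \<le> real n *\<^sub>R t + v"
      using t(3) by (rule add_left_mono)
    also have "\<dots> \<le> w"
      using gap[OF ideal_vl_scaleR_nat[OF I t(1)] _ Suc.IH] t(2) by (simp add: scaleR_nonneg_nonneg)
    finally show ?case .
  qed
qed

lemma disj_compl_antimono: "A \<subseteq> B \<Longrightarrow> disj_compl B \<subseteq> disj_compl A"
  unfolding disj_compl_def by blast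

lemma disj_compl_ideal: "ideal_vl (disj_compl N)"
  unfolding ideal_vl_def
proof (intro conjI ballI)
  show "0 \<in> disj_compl N"
    unfolding disj_compl_def by (simp add: inf_absorb1)
  show "solid (disj_compl N)"
    unfolding solid_def disj_compl_def
  proof (intro allI impI CollectI ballI, elim conjE)
    fix x y z
    assume y: "y \<in> {x. \<forall>y\<in>N. inf (vabs x) (vabs y) = 0}" and "vabs x \<le> vabs y" and "z \<in> N"
    have "inf (vabs x) (vabs z) \<le> inf (vabs y) (vabs z)"
      by (rule inf_mono[OF \<open>vabs x \<le> vabs y\<close> order_refl])
    also have "\<dots> = 0"
      using y \<open>z \<in> N\<close> by simp
    finally show "inf (vabs x) (vabs z) = 0"
      by (rule order.antisym) simp
  qed
  fix x y
  assume "x \<in> disj_compl N" "y \<in> disj_compl N"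
  then show "x + y \<in> disj_compl N"
    unfolding disj_compl_def
  proof (intro CollectI ballI)
    fix z
    assume xy: "x \<in> {x. \<forall>y\<in>N. inf (vabs x) (vabs y) = 0}" "y \<in> {x. \<forall>y\<in>N. inf (vabs x) (vabs y) = 0}"
      and "z \<in> N"
    have "inf (vabs (x + y)) (vabs z) \<le> inf (vabs x + vabs y) (vabs z)"
      by (rule inf_mono[OF vl.abs_triangle_ineq order_refl])
    also have "\<dots> = inf (vabs z) (vabs x + vabs y)"
      by (rule inf_commute)
    also have "\<dots> \<le> inf (vabs z) (vabs x) + inf (vabs z) (vabs y)"
      by (rule vl.inf_add_le_add_inf) simp_all
    also have "\<dots> = 0"
    proof -
      have "inf (vabs x) (vabs z) = 0" "inf (vabs y) (vabs z) = 0"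
        using xy \<open>z \<in> N\<close> by simp_all
      then show ?thesis
        by (metis add_0 inf_commute)
    qed
    finally show "inf (vabs (x + y)) (vabs z) = 0"
      by (rule order.antisym) simp
  qed
qed

lemma disj_compl_is_sup:
  assumes sup: "is_sup_of T x" and "0 \<le> x"
    and pos: "\<And>c. c \<in> T \<Longrightarrow> 0 \<le> c" and T: "T \<subseteq> disj_compl N"
  shows "x \<in> disj_compl N"
  unfolding disj_compl_def
proof (intro CollectI ballI)
  fix y
  assume "y \<in> N"
  have "c \<le> x - inf x (vabs y)" if "c \<in> T" for c
  proof -
    have "c \<le> x"
      using sup that unfolding is_sup_of_def by blast
    have "inf c (vabs y) = 0"
      using T that \<open>y \<in> N\<close> pos[OF that] unfolding disj_compl_def by (auto simp: vl.abs_of_nonneg)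
    have "inf x (vabs y) \<le> inf (x - c + c) (x - c + vabs y)"
      using \<open>c \<le> x\<close> by (intro inf_mono) (simp_all add: add_increasing)
    also have "\<dots> = x - c + inf c (vabs y)"
      by (rule vl.add_inf_distrib_left[symmetric])
    also have "\<dots> = x - c"
      using \<open>inf c (vabs y) = 0\<close> by simp
    finally show ?thesis
      by (simp add: le_diff_eq add.commute)
  qed
  then have "x \<le> x - inf x (vabs y)"
    using sup unfolding is_sup_of_def by blast
  then have "inf (vabs x) (vabs y) \<le> 0"
    using \<open>0 \<le> x\<close> by (simp add: vl.abs_of_nonneg)
  then show "inf (vabs x) (vabs y) = 0"
    by (rule order.antisym) simp
qed

lemma directed_ideal_interval:
  assumes "ideal_vl N" and "0 \<le> w"
  shows "directed {a \<in> N. 0 \<le> a \<and> a \<le> w} (\<le>)"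
  unfolding directed_def
proof (intro conjI ballI impI)
  show "\<exists>c\<in>{a \<in> N. 0 \<le> a \<and> a \<le> w}. a \<le> c \<and> b \<le> c"
    if "a \<in> {a \<in> N. 0 \<le> a \<and> a \<le> w}" "b \<in> {a \<in> N. 0 \<le> a \<and> a \<le> w}" for a b
    using that ideal_vl_sup[OF assms(1)] by (intro bexI[of _ "sup a b"]) (auto simp: le_supI1)
qed (use assms in \<open>auto simp: ideal_vl_def\<close>)

lemma is_sup_of_ideal_interval:
  fixes N :: "'a::{ordered_real_vector,lattice} set"
  assumes arch: "archimedean_vl TYPE('a)" and N: "ideal_vl N" and "0 \<le> w"
    and no_disj: "\<And>v. v \<in> disj_compl N \<Longrightarrow> 0 \<le> v \<Longrightarrow> v \<le> w \<Longrightarrow> v = 0"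
  shows "is_sup_of {a \<in> N. 0 \<le> a \<and> a \<le> w} w"
proof -
  have "is_sup_of (id ` {a \<in> N. 0 \<le> a \<and> a \<le> w}) w"
  proof (rule is_sup_of_if_gaps_vanish)
    show "id a \<le> w" if "a \<in> {a \<in> N. 0 \<le> a \<and> a \<le> w}" for a
      using that by simp
    fix v
    assume "0 \<le> v" and gap: "\<And>a. a \<in> {a \<in> N. 0 \<le> a \<and> a \<le> w} \<Longrightarrow> id a + v \<le> w"
    have gap': "a + v \<le> w" if "a \<in> N" "0 \<le> a" "a \<le> w" for a
      using gap[of a] that by simp
    have "v \<in> disj_compl N"
      unfolding disj_compl_def
    proof (intro CollectI ballI)
      fix y
      assume "y \<in> N"
      have "vabs (inf v (vabs y)) \<le> vabs y"
        using \<open>0 \<le> v\<close> by (simp add: vl.abs_of_nonneg)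
      then have "inf v (vabs y) \<in> N"
        using N \<open>y \<in> N\<close> solidD unfolding ideal_vl_def by blast
      then have "inf v (vabs y) = 0"
        using ideal_le_gap_eq_0[OF arch N \<open>0 \<le> w\<close> gap'] \<open>0 \<le> v\<close> by simp
      then show "inf (vabs v) (vabs y) = 0"
        using \<open>0 \<le> v\<close> by (simp add: vl.abs_of_nonneg)
    qed
    moreover have "v \<le> w"
      using gap'[of 0] N \<open>0 \<le> w\<close> unfolding ideal_vl_def by simp
    ultimately show "v = 0"
      using no_disj \<open>0 \<le> v\<close> by blast
  qed
  then show ?thesis
    by simp
qed

lemma carrier_top_iff:
  "x \<in> carrier_top \<tau> \<longleftrightarrow> (\<exists>V. normal_solid_seq \<tau> V \<and> x \<in> disj_compl (\<Inter>n. V n))"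
  unfolding carrier_top_def by blast

lemma carrier_top_ideal:
  assumes "linear_topology (\<tau>::'a::{ordered_real_vector,lattice} topology)"
  shows "ideal_vl (carrier_top \<tau>)"
  unfolding ideal_vl_def
proof (intro conjI ballI)
  show "0 \<in> carrier_top \<tau>"
    using normal_solid_seq_UNIV[OF assms] disj_compl_ideal
    unfolding carrier_top_iff ideal_vl_def by blast
  show "solid (carrier_top \<tau>)"
    unfolding solid_def
  proof (intro allI impI, elim conjE)
    fix x y
    assume "y \<in> carrier_top \<tau>" "vabs x \<le> vabs y"
    then obtain V where "normal_solid_seq \<tau> V" "y \<in> disj_compl (\<Inter>n. V n)"
      unfolding carrier_top_iff by blast
    moreover have "solid (disj_compl (\<Inter>n. V n))"
      using disj_compl_ideal unfolding ideal_vl_def by blast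
    ultimately show "x \<in> carrier_top \<tau>"
      unfolding carrier_top_iff using solidD \<open>vabs x \<le> vabs y\<close> by blast
  qed
  fix x y
  assume "x \<in> carrier_top \<tau>" "y \<in> carrier_top \<tau>"
  then obtain V W where V: "normal_solid_seq \<tau> V" "x \<in> disj_compl (\<Inter>n. V n)"
    and W: "normal_solid_seq \<tau> W" "y \<in> disj_compl (\<Inter>n. W n)"
    unfolding carrier_top_iff by blast
  have "x \<in> disj_compl (\<Inter>n. V n \<inter> W n)" "y \<in> disj_compl (\<Inter>n. V n \<inter> W n)"
    using V(2) W(2) disj_compl_antimono[of "\<Inter>n. V n \<inter> W n"] by blast+
  then have "x + y \<in> disj_compl (\<Inter>n. V n \<inter> W n)"
    using disj_compl_ideal unfolding ideal_vl_def by blast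
  then show "x + y \<in> carrier_top \<tau>"
    unfolding carrier_top_iff using normal_solid_seq_Int[OF V(1) W(1)] by blast
qed

lemma carrier_top_countable_common_normal_seq:
  assumes lin: "linear_topology (\<tau>::'a::{ordered_real_vector,lattice} topology)"
    and "countable T" "T \<subseteq> carrier_top \<tau>"
  shows "\<exists>W. normal_solid_seq \<tau> W \<and> T \<subseteq> disj_compl (\<Inter>n. W n)"
proof (cases "T = {}")
  case True
  then show ?thesis
    using normal_solid_seq_UNIV[OF lin] by blast
next
  case False
  then have T: "range (from_nat_into T) = T"
    using range_from_nat_into[OF _ assms(2)] by blast
  have "from_nat_into T k \<in> carrier_top \<tau>" for k
    using assms(3) from_nat_into[OF False] by blast
  then have "\<forall>k. \<exists>V. normal_solid_seq \<tau> V \<and> from_nat_into T k \<in> disj_compl (\<Inter>i. V i)"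
    unfolding carrier_top_iff by blast
  then obtain V where "\<forall>k. normal_solid_seq \<tau> (V k) \<and> from_nat_into T k \<in> disj_compl (\<Inter>i. V k i)"
    by (rule choice[THEN exE])
  then have V: "\<And>k. normal_solid_seq \<tau> (V k)"
    and disj: "\<And>k. from_nat_into T k \<in> disj_compl (\<Inter>i. V k i)"
    by blast+
  define G where "G n i = (\<Inter>k\<le>n. V k i)" for n i
  have G: "normal_solid_seq \<tau> (G n)" for n
    unfolding G_def by (rule normal_solid_seq_INT_atMost[OF V])
  have dec: "G (Suc n) i \<subseteq> G n i" for n i
    unfolding G_def by (auto simp: atMost_Suc)
  have "G k i \<subseteq> V k i" for k i
    unfolding G_def by (rule INT_lower) simp
  then have "(\<Inter>n. G n (Suc n)) \<subseteq> (\<Inter>i. V k i)" for k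
    using normal_solid_seq_diagonal(2)[of \<tau> G, OF G dec, of k] by blast
  then have "from_nat_into T k \<in> disj_compl (\<Inter>n. G n (Suc n))" for k
    using disj[of k] disj_compl_antimono by blast
  then have "range (from_nat_into T) \<subseteq> disj_compl (\<Inter>n. G n (Suc n))"
    by blast
  then have "T \<subseteq> disj_compl (\<Inter>n. G n (Suc n))"
    unfolding T .
  then show ?thesis
    using normal_solid_seq_diagonal(1)[of \<tau> G, OF G dec] by blast
qed

section \<open>Nets and order convergence\<close>

lemma directed_refl: "directed D le \<Longrightarrow> a \<in> D \<Longrightarrow> le a a"
  unfolding directed_def by blast

lemma directed_trans: "directed D le \<Longrightarrow> a \<in> D \<Longrightarrow> b \<in> D \<Longrightarrow> c \<in> D \<Longrightarrow> le a b \<Longrightarrow> le b c \<Longrightarrow> le a c"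
  unfolding directed_def by blast

lemma directed_upper_bound: "directed D le \<Longrightarrow> a \<in> D \<Longrightarrow> b \<in> D \<Longrightarrow> \<exists>c\<in>D. le a c \<and> le b c"
  unfolding directed_def by blast

lemma directed_UNIV_linorder: "directed (UNIV :: 'a::linorder set) (\<le>)"
  unfolding directed_def
  by (meson UNIV_I UNIV_not_empty max.cobounded1 max.cobounded2 order_refl order_trans)

lemma net_eventually_beyond:
  assumes D: "directed D le" and P: "net_eventually D le P" and "a \<in> D"
  shows "\<exists>a'\<in>D. le a a' \<and> (\<not> (\<exists>m\<in>D. \<forall>b\<in>D. le b m) \<longrightarrow> \<not> le a' a) \<and>
    (\<forall>b\<in>D. le a' b \<longrightarrow> P b)"
proof -
  obtain a0 where a0: "a0 \<in> D" "\<And>b. b \<in> D \<Longrightarrow> le a0 b \<Longrightarrow> P b"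
    using P unfolding net_eventually_def by blast
  obtain c where c: "c \<in> D" "le a c" "le a0 c"
    using directed_upper_bound[OF D \<open>a \<in> D\<close> a0(1)] by blast
  have Pc: "P b" if "b \<in> D" "le c b" for b
    using a0 c that directed_trans[OF D] by blast
  show ?thesis
  proof (cases "\<exists>m\<in>D. \<forall>b\<in>D. le b m")
    case True
    with c Pc show ?thesis
      by blast
  next
    case False
    then obtain e where e: "e \<in> D" "\<not> le e a"
      using \<open>a \<in> D\<close> by blast
    obtain c' where c': "c' \<in> D" "le c c'" "le e c'"
      using directed_upper_bound[OF D c(1) e(1)] by blast
    have "le a c'" "\<not> le c' a"
      using directed_trans[OF D] \<open>a \<in> D\<close> c c' e by blast+
    moreover have "P b" if "b \<in> D" "le c' b" for b
      using Pc directed_trans[OF D] c c' that by blast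
    ultimately show ?thesis
      using c'(1) by blast
  qed
qed

lemma order_convI:
  fixes Y :: "'a::{ordered_real_vector,lattice} set"
  assumes "Y \<noteq> {}" and "\<And>y1 y2. y1 \<in> Y \<Longrightarrow> y2 \<in> Y \<Longrightarrow> \<exists>y\<in>Y. y \<le> y1 \<and> y \<le> y2"
    and "is_inf_of Y 0" and "\<And>y. y \<in> Y \<Longrightarrow> net_eventually D le (\<lambda>a. vabs (x a - l) \<le> y)"
  shows "order_conv D le x l"
  unfolding order_conv_def
proof (intro exI conjI)
  show "directed Y (\<lambda>y1 y2. y2 \<le> y1)"
    unfolding directed_def using assms(1,2) by (meson order_refl order_trans)
  show "\<forall>y1\<in>Y. \<forall>y2\<in>Y. y2 \<le> y1 \<longrightarrow> id y2 \<le> id y1"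
    by simp
  show "is_inf_of (id ` Y) 0"
    using assms(3) by simp
  show "\<forall>y\<in>Y. net_eventually D le (\<lambda>a. vabs (x a - l) \<le> id y)"
    using assms(4) by simp
qed

lemma order_conv_increasing:
  fixes x :: "'j \<Rightarrow> 'a::{ordered_real_vector,lattice}"
  assumes D: "directed D le" and mono: "\<And>a b. a \<in> D \<Longrightarrow> b \<in> D \<Longrightarrow> le a b \<Longrightarrow> x a \<le> x b"
    and sup: "is_sup_of (x ` D) l"
  shows "order_conv D le x l"
proof (rule order_convI[where Y = "(\<lambda>a. l - x a) ` D"])
  have le_l: "x a \<le> l" if "a \<in> D" for a
    using sup that unfolding is_sup_of_def by blast
  show "(\<lambda>a. l - x a) ` D \<noteq> {}"
    using D unfolding directed_def by blast
  show "\<exists>y\<in>(\<lambda>a. l - x a) ` D. y \<le> y1 \<and> y \<le> y2"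
    if "y1 \<in> (\<lambda>a. l - x a) ` D" "y2 \<in> (\<lambda>a. l - x a) ` D" for y1 y2
  proof -
    from that obtain a1 a2 where a: "a1 \<in> D" "a2 \<in> D" "y1 = l - x a1" "y2 = l - x a2"
      by blast
    from directed_upper_bound[OF D a(1,2)] obtain c where "c \<in> D" "le a1 c" "le a2 c"
      by blast
    with a mono show ?thesis
      by (intro bexI[of _ "l - x c"]) auto
  qed
  show "is_inf_of ((\<lambda>a. l - x a) ` D) 0"
    unfolding is_inf_of_def
  proof (intro conjI allI impI ballI)
    show "0 \<le> y" if "y \<in> (\<lambda>a. l - x a) ` D" for y
      using that le_l by auto
    fix w
    assume "\<forall>y\<in>(\<lambda>a. l - x a) ` D. w \<le> y"
    then have "\<forall>s\<in>x ` D. s \<le> l - w"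
      by (simp add: le_diff_eq add.commute)
    then have "l \<le> l - w"
      using sup unfolding is_sup_of_def by blast
    then show "w \<le> 0"
      by simp
  qed
  show "net_eventually D le (\<lambda>a. vabs (x a - l) \<le> y)" if "y \<in> (\<lambda>a. l - x a) ` D" for y
  proof -
    from that obtain a0 where "a0 \<in> D" "y = l - x a0"
      by blast
    moreover have "vabs (x a - l) = l - x a" if "a \<in> D" for a
      using le_l[OF that] by (simp add: vl.abs_minus_commute vl.abs_of_nonneg)
    ultimately show ?thesis
      unfolding net_eventually_def using mono by (auto intro!: bexI[of _ a0])
  qed
qed

lemma order_conv_0_const_le_0:
  fixes z :: "'j \<Rightarrow> 'a::{ordered_real_vector,lattice}"
  assumes oc: "order_conv D le z 0" and D: "directed D le"
    and c: "\<And>a. a \<in> D \<Longrightarrow> c \<le> vabs (z a)"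
  shows "c \<le> 0"
proof -
  obtain B :: "'a set" and leB y where B: "is_inf_of (y ` B) 0"
    "\<forall>b\<in>B. net_eventually D le (\<lambda>a. vabs (z a - 0) \<le> y b)"
    using oc unfolding order_conv_def by blast
  have "c \<le> y b" if b: "b \<in> B" for b
  proof -
    obtain a0 where "a0 \<in> D" "\<And>a. a \<in> D \<Longrightarrow> le a0 a \<Longrightarrow> vabs (z a) \<le> y b"
      using B(2) b unfolding net_eventually_def by auto
    then show ?thesis
      using c directed_refl[OF D] order_trans by blast
  qed
  then show ?thesis
    using B(1) unfolding is_inf_of_def by blast
qed

lemma net_eventually_reindex:
  assumes "inj g"
  shows "net_eventually (g ` D) (\<lambda>a b. le (inv g a) (inv g b)) (\<lambda>a. P (inv g a)) \<longleftrightarrow>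
    net_eventually D le P"
  unfolding net_eventually_def by (simp add: inv_f_f[OF assms])

lemma directed_reindex:
  assumes "inj g"
  shows "directed (g ` D) (\<lambda>a b. le (inv g a) (inv g b)) \<longleftrightarrow> directed D le"
  unfolding directed_def by (simp add: inv_f_f[OF assms])

lemma order_conv_reindex:
  fixes x :: "'j \<Rightarrow> 'a::{ordered_real_vector,lattice}"
  assumes "inj g" and "order_conv D le x l"
  shows "order_conv (g ` D) (\<lambda>a b. le (inv g a) (inv g b)) (\<lambda>a. x (inv g a)) l"
proof -
  obtain B leB y where B: "directed (B :: 'a set) leB" "\<forall>b1\<in>B. \<forall>b2\<in>B. leB b1 b2 \<longrightarrow> y b2 \<le> y b1"
    "is_inf_of (y ` B) 0" "\<forall>b\<in>B. net_eventually D le (\<lambda>a. vabs (x a - l) \<le> y b)"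
    using assms(2) unfolding order_conv_def by blast
  have "net_eventually (g ` D) (\<lambda>a b. le (inv g a) (inv g b)) (\<lambda>a. vabs (x (inv g a) - l) \<le> y b)"
    if "b \<in> B" for b
    using B(4) that net_eventually_reindex[OF assms(1), of D le "\<lambda>a. vabs (x a - l) \<le> y b"] by simp
  with B(1-3) show ?thesis
    unfolding order_conv_def by blast
qed

lemma net_tendsto_reindex:
  assumes "inj g"
  shows "net_tendsto \<tau> (g ` D) (\<lambda>a b. le (inv g a) (inv g b)) (\<lambda>a. x (inv g a)) l \<longleftrightarrow>
    net_tendsto \<tau> D le x l"
  using net_eventually_reindex[OF assms, of D le "\<lambda>a. x a \<in> _"] unfolding net_tendsto_def by simp

(* o_lebesgue only speaks about nets indexed by subsets of 'i; an injection into 'i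
   transports any other net there. *)
lemma o_lebesgue_net_tendsto:
  fixes \<tau> :: "'a::{ordered_real_vector,lattice} topology" and g :: "'j \<Rightarrow> 'i" and D :: "'j set"
  assumes "o_lebesgue TYPE('i) \<tau>" and "inj g" and "directed D le" and "order_conv D le x l"
  shows "net_tendsto \<tau> D le x l"
proof -
  have "net_tendsto \<tau> (g ` D) (\<lambda>a b. le (inv g a) (inv g b)) (\<lambda>a. x (inv g a)) l"
    using assms(1) directed_reindex[OF assms(2), THEN iffD2, OF assms(3)]
      order_conv_reindex[OF assms(2,4)]
    unfolding o_lebesgue_def by blast
  then show ?thesis
    using net_tendsto_reindex[OF assms(2), of \<tau> D le x l] by blast
qed

(* The fixed element s0 keeps Sup_fin away from the empty set, where it is unspecified. *)
definition fin_subsets_containing :: "'a set \<Rightarrow> 'a \<Rightarrow> 'a set set" where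
  "fin_subsets_containing S s0 = {F. finite F \<and> s0 \<in> F \<and> F \<subseteq> S}"

lemma directed_fin_subsets_containing:
  assumes "s0 \<in> S"
  shows "directed (fin_subsets_containing S s0) (\<subseteq>)"
  unfolding directed_def fin_subsets_containing_def
proof (intro conjI ballI impI)
  show "{F. finite F \<and> s0 \<in> F \<and> F \<subseteq> S} \<noteq> {}"
    using assms by (auto intro: exI[of _ "{s0}"])
  show "\<exists>c\<in>{F. finite F \<and> s0 \<in> F \<and> F \<subseteq> S}. a \<subseteq> c \<and> b \<subseteq> c"
    if "a \<in> {F. finite F \<and> s0 \<in> F \<and> F \<subseteq> S}" "b \<in> {F. finite F \<and> s0 \<in> F \<and> F \<subseteq> S}" for a b
    using that by (intro bexI[of _ "a \<union> b"]) auto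
qed auto

lemma Sup_fin_mono_fin_subsets_containing:
  "F \<in> fin_subsets_containing S s0 \<Longrightarrow> G \<in> fin_subsets_containing S s0 \<Longrightarrow> F \<subseteq> G \<Longrightarrow>
    Sup_fin F \<le> Sup_fin G"
  unfolding fin_subsets_containing_def by (intro Sup_fin.subset_imp) auto

lemma Sup_fin_ge_fin_subsets_containing:
  "F \<in> fin_subsets_containing S s0 \<Longrightarrow> s0 \<le> Sup_fin F"
  unfolding fin_subsets_containing_def by (intro Sup_fin.coboundedI) auto

lemma Sup_fin_le_fin_subsets_containing:
  "is_sup_of S m \<Longrightarrow> F \<in> fin_subsets_containing S s0 \<Longrightarrow> Sup_fin F \<le> m"
  unfolding fin_subsets_containing_def is_sup_of_def by (intro Sup_fin.boundedI) auto

lemma is_sup_of_Sup_fin: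
  assumes "is_sup_of S m" and "s0 \<in> S"
  shows "is_sup_of (Sup_fin ` fin_subsets_containing S s0) m"
  unfolding is_sup_of_def
proof (intro conjI allI impI ballI)
  show "s \<le> m" if "s \<in> Sup_fin ` fin_subsets_containing S s0" for s
    using that Sup_fin_le_fin_subsets_containing[OF assms(1)] by blast
  fix u
  assume ub: "\<forall>s\<in>Sup_fin ` fin_subsets_containing S s0. s \<le> u"
  have "s \<le> u" if "s \<in> S" for s
  proof -
    have "{s0, s} \<in> fin_subsets_containing S s0"
      using that assms(2) unfolding fin_subsets_containing_def by auto
    then have "Sup_fin {s0, s} \<le> u"
      using ub by blast
    then show ?thesis
      by simp
  qed
  then show "m \<le> u"
    using assms(1) unfolding is_sup_of_def by blast
qed

lemma order_conv_Sup_fin: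
  assumes "is_sup_of S m" and "s0 \<in> S"
  shows "order_conv (fin_subsets_containing S s0) (\<subseteq>) Sup_fin m"
  using directed_fin_subsets_containing[OF assms(2)] Sup_fin_mono_fin_subsets_containing
    is_sup_of_Sup_fin[OF assms]
  by (rule order_conv_increasing)

lemma countable_sup_property_if_Sup_fin_gaps_vanish:
  assumes "\<And>(S :: 'a::{ordered_real_vector,lattice} set) m s0. is_sup_of S m \<Longrightarrow> s0 \<in> S \<Longrightarrow>
    \<exists>F. (\<forall>n::nat. F n \<in> fin_subsets_containing S s0) \<and>
      (\<forall>v. 0 \<le> v \<and> (\<forall>n. Sup_fin (F n) + v \<le> m) \<longrightarrow> v = 0)"
  shows "countable_sup_property TYPE('a)"
  unfolding countable_sup_property_def
proof (intro allI impI)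
  fix S :: "'a set" and m
  assume sup: "is_sup_of S m"
  show "\<exists>T\<subseteq>S. countable T \<and> is_sup_of T m"
  proof (cases "S = {}")
    case True
    with sup show ?thesis
      by blast
  next
    case False
    then obtain s0 where "s0 \<in> S"
      by blast
    from assms[OF sup this] obtain F :: "nat \<Rightarrow> 'a set"
      where F: "\<forall>n. F n \<in> fin_subsets_containing S s0"
      and gaps: "\<forall>v. 0 \<le> v \<and> (\<forall>n. Sup_fin (F n) + v \<le> m) \<longrightarrow> v = 0"
      by blast
    have "is_sup_of (range (\<lambda>n. Sup_fin (F n))) m"
    proof (rule is_sup_of_if_gaps_vanish)
      show "Sup_fin (F n) \<le> m" for n
        using F Sup_fin_le_fin_subsets_containing[OF sup] by blast
      show "v = 0" if "0 \<le> v" "\<And>n. n \<in> UNIV \<Longrightarrow> Sup_fin (F n) + v \<le> m" for v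
        using gaps that by blast
    qed
    show ?thesis
    proof (intro exI conjI)
      show "(\<Union>n. F n) \<subseteq> S"
        using F unfolding fin_subsets_containing_def by blast
      have "countable (F n)" for n
        using F unfolding fin_subsets_containing_def by (simp add: countable_finite)
      then show "countable (\<Union>n. F n)"
        by simp
      show "is_sup_of (\<Union>n. F n) m"
        unfolding is_sup_of_def
      proof (intro conjI allI impI ballI)
        show "s \<le> m" if "s \<in> (\<Union>n. F n)" for s
          using that \<open>(\<Union>n. F n) \<subseteq> S\<close> sup unfolding is_sup_of_def by blast
        fix u
        assume "\<forall>s\<in>\<Union>n. F n. s \<le> u"
        then have "Sup_fin (F n) \<le> u" for n
          using F unfolding fin_subsets_containing_def by (intro Sup_fin.boundedI) auto
        then show "m \<le> u"
          using \<open>is_sup_of (range (\<lambda>n. Sup_fin (F n))) m\<close> unfolding is_sup_of_def by blast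
      qed
    qed
  qed
qed

section \<open>The carrier and the countable sup property\<close>

(* Otherwise w would be the supremum, hence the order limit and the tau-limit, of the
   positive part below w of the intersection of a normal sequence avoiding w. *)
lemma carrier_top_dense:
  fixes \<tau> :: "'a::{ordered_real_vector,lattice} topology" and f :: "'a set \<Rightarrow> 'i"
  assumes arch: "archimedean_vl TYPE('a)" and olb: "o_lebesgue TYPE('i) \<tau>" and f: "inj f"
    and "0 \<le> w" "w \<noteq> 0"
  shows "\<exists>v\<in>carrier_top \<tau>. 0 \<le> v \<and> v \<le> w \<and> v \<noteq> 0"
proof (rule ccontr)
  assume none: "\<not> ?thesis"
  have ls: "locally_solid \<tau>"
    using olb by (rule o_lebesgue_locally_solid)
  then have lin: "linear_topology \<tau>"
    by (rule locally_solid_linear_topology)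
  obtain U where U: "nbhd0 \<tau> U" "w \<notin> U"
    using nbhd0_not_mem[OF lin \<open>w \<noteq> 0\<close>] by blast
  obtain V where V: "normal_solid_seq \<tau> V" "V 0 \<subseteq> U"
    using normal_solid_seq_exists[OF ls U(1)] by blast
  define A where "A = {a \<in> (\<Inter>n. V n). 0 \<le> a \<and> a \<le> w}"
  have N: "ideal_vl (\<Inter>n. V n)"
    using V(1) by (rule normal_solid_seq_Inter_ideal)
  have dir: "directed A (\<le>)"
    unfolding A_def using N \<open>0 \<le> w\<close> by (rule directed_ideal_interval)
  have "v = 0" if v: "v \<in> disj_compl (\<Inter>n. V n)" "0 \<le> v" "v \<le> w" for v
  proof -
    have "v \<in> carrier_top \<tau>"
      using V(1) v(1) unfolding carrier_top_iff by blast
    with none v(2,3) show ?thesis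
      by blast
  qed
  then have "is_sup_of (id ` A) w"
    unfolding A_def using is_sup_of_ideal_interval[OF arch N \<open>0 \<le> w\<close>] by simp
  then have "order_conv A (\<le>) id w"
    by (rule order_conv_increasing[OF dir, rotated]) simp
  moreover have "inj (\<lambda>a. f {a})"
    using inj_compose[OF f inj_singleton] by (simp add: o_def)
  ultimately have "net_tendsto \<tau> A (\<le>) id w"
    using o_lebesgue_net_tendsto[OF olb _ dir] by blast
  then have "w \<in> V 0"
    by (rule net_tendsto_limit_mem[OF lin dir _ V(1)]) (simp add: A_def)
  with U(2) V(2) show False
    by blast
qed

lemma is_sup_of_carrier_top_interval:
  fixes \<tau> :: "'a::{ordered_real_vector,lattice} topology" and f :: "'a set \<Rightarrow> 'i"
  assumes arch: "archimedean_vl TYPE('a)" and olb: "o_lebesgue TYPE('i) \<tau>" and f: "inj f"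
    and "0 \<le> x"
  shows "is_sup_of {c \<in> carrier_top \<tau>. 0 \<le> c \<and> c \<le> x} x"
proof -
  have lin: "linear_topology \<tau>"
    using olb by (intro locally_solid_linear_topology o_lebesgue_locally_solid)
  have "is_sup_of (id ` {c \<in> carrier_top \<tau>. 0 \<le> c \<and> c \<le> x}) x"
  proof (rule is_sup_of_if_gaps_vanish)
    show "id c \<le> x" if "c \<in> {c \<in> carrier_top \<tau>. 0 \<le> c \<and> c \<le> x}" for c
      using that by simp
    fix v
    assume "0 \<le> v" and gap: "\<And>c. c \<in> {c \<in> carrier_top \<tau>. 0 \<le> c \<and> c \<le> x} \<Longrightarrow> id c + v \<le> x"
    show "v = 0"
    proof (rule ccontr)
      assume "v \<noteq> 0"
      then obtain c where c: "c \<in> carrier_top \<tau>" "0 \<le> c" "c \<le> v" "c \<noteq> 0"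
        using carrier_top_dense[OF arch olb f \<open>0 \<le> v\<close>] by blast
      have "a + v \<le> x" if "a \<in> carrier_top \<tau>" "0 \<le> a" "a \<le> x" for a
        using gap[of a] that by simp
      then have "c = 0"
        using ideal_le_gap_eq_0[OF arch carrier_top_ideal[OF lin] \<open>0 \<le> x\<close>] c(1-3) by blast
      with c(4) show False ..
    qed
  qed
  then show ?thesis
    by simp
qed

lemma carrier_top_eq_UNIV_if_countable_sup_property:
  fixes \<tau> :: "'a::{ordered_real_vector,lattice} topology" and f :: "'a set \<Rightarrow> 'i"
  assumes arch: "archimedean_vl TYPE('a)" and olb: "o_lebesgue TYPE('i) \<tau>" and f: "inj f"
    and csp: "countable_sup_property TYPE('a)"
  shows "carrier_top \<tau> = UNIV"
proof -
  have lin: "linear_topology \<tau>"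
    using olb by (intro locally_solid_linear_topology o_lebesgue_locally_solid)
  have "x \<in> carrier_top \<tau>" for x
  proof -
    have sup: "is_sup_of {c \<in> carrier_top \<tau>. 0 \<le> c \<and> c \<le> vabs x} (vabs x)"
      by (rule is_sup_of_carrier_top_interval[OF arch olb f]) simp
    obtain T where T: "T \<subseteq> {c \<in> carrier_top \<tau>. 0 \<le> c \<and> c \<le> vabs x}" "countable T"
      "is_sup_of T (vabs x)"
      using csp[unfolded countable_sup_property_def, rule_format, OF sup] by blast
    have "T \<subseteq> carrier_top \<tau>"
      using T(1) by blast
    then obtain W where W: "normal_solid_seq \<tau> W" "T \<subseteq> disj_compl (\<Inter>n. W n)"
      using carrier_top_countable_common_normal_seq[OF lin T(2)] by blast
    have "vabs x \<in> disj_compl (\<Inter>n. W n)"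
      using T(3) _ _ W(2) by (rule disj_compl_is_sup) (use T(1) in auto)
    then have "x \<in> disj_compl (\<Inter>n. W n)"
      using disj_compl_ideal solid_vabs_iff unfolding ideal_vl_def by blast
    with W(1) show ?thesis
      unfolding carrier_top_iff by blast
  qed
  then show ?thesis
    by blast
qed

lemma countable_sup_property_if_carrier_top_eq_UNIV:
  fixes \<tau> :: "'a::{ordered_real_vector,lattice} topology" and f :: "'a set \<Rightarrow> 'i"
  assumes olb: "o_lebesgue TYPE('i) \<tau>" and f: "inj f" and C: "carrier_top \<tau> = UNIV"
  shows "countable_sup_property TYPE('a)"
proof (rule countable_sup_property_if_Sup_fin_gaps_vanish)
  fix S :: "'a set" and m s0
  assume sup: "is_sup_of S m" and s0: "s0 \<in> S"
  have lin: "linear_topology \<tau>"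
    using olb by (intro locally_solid_linear_topology o_lebesgue_locally_solid)
  have tendsto: "net_tendsto \<tau> (fin_subsets_containing S s0) (\<subseteq>) Sup_fin m"
    using olb f directed_fin_subsets_containing[OF s0] order_conv_Sup_fin[OF sup s0]
    by (rule o_lebesgue_net_tendsto)
  have "m - s0 \<in> carrier_top \<tau>"
    using C by simp
  then obtain V where V: "normal_solid_seq \<tau> V" "m - s0 \<in> disj_compl (\<Inter>n. V n)"
    unfolding carrier_top_iff by blast
  have "\<forall>n. \<exists>F. F \<in> fin_subsets_containing S s0 \<and> Sup_fin F - m \<in> V n"
    using net_tendsto_eventually_diff_mem[OF lin tendsto normal_solid_seq_nbhd0[OF V(1)]]
      directed_refl[OF directed_fin_subsets_containing[OF s0]]
    unfolding net_eventually_def by blast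
  then obtain F where "\<forall>n. F n \<in> fin_subsets_containing S s0 \<and> Sup_fin (F n) - m \<in> V n"
    by (rule choice[THEN exE])
  then have F: "\<And>n. F n \<in> fin_subsets_containing S s0" "\<And>n. Sup_fin (F n) - m \<in> V n"
    by blast+
  have gaps: "v = 0" if "0 \<le> v" and gap: "\<And>n. Sup_fin (F n) + v \<le> m" for v
  proof -
    have "v \<in> V n" for n
    proof (rule solidD[OF normal_solid_seq_solid[OF V(1)] F(2)])
      show "vabs v \<le> vabs (Sup_fin (F n) - m)"
        using gap[of n] Sup_fin_le_fin_subsets_containing[OF sup F(1)] \<open>0 \<le> v\<close>
        by (simp add: vl.abs_of_nonneg vl.abs_minus_commute[of _ m] le_diff_eq add.commute)
    qed
    moreover have "v \<le> m - s0"
    proof -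
      have "s0 + v \<le> Sup_fin (F 0) + v"
        using Sup_fin_ge_fin_subsets_containing[OF F(1)] by (rule add_right_mono)
      also have "\<dots> \<le> m"
        by (rule gap)
      finally show ?thesis
        by (simp add: le_diff_eq add.commute)
    qed
    ultimately have "inf v v \<le> inf (m - s0) (vabs v)"
      using \<open>0 \<le> v\<close> by (simp add: vl.abs_of_nonneg le_infI1)
    also have "\<dots> = 0"
      using V(2) \<open>v \<in> V _\<close> sup s0 unfolding disj_compl_def is_sup_of_def
      by (auto simp: vl.abs_of_nonneg)
    finally show "v = 0"
      using \<open>0 \<le> v\<close> by simp
  qed
  show "\<exists>F. (\<forall>n::nat. F n \<in> fin_subsets_containing S s0) \<and>
      (\<forall>v. 0 \<le> v \<and> (\<forall>n. Sup_fin (F n) + v \<le> m) \<longrightarrow> v = 0)"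
  proof (rule exI[where x = F], intro conjI allI impI)
    show "F n \<in> fin_subsets_containing S s0" for n
      by (rule F(1))
    show "v = 0" if "0 \<le> v \<and> (\<forall>n. Sup_fin (F n) + v \<le> m)" for v
      using that by (intro gaps) simp_all
  qed
qed

lemma uo_conv_gap_eq_0:
  fixes y :: "nat \<Rightarrow> 'a::{ordered_real_vector,lattice}"
  assumes uo: "uo_conv UNIV (\<le>) y l" and le: "\<And>n. y n \<le> l"
    and "0 \<le> v" and gap: "\<And>n. y n + v \<le> l"
  shows "v = 0"
proof -
  have bound: "v \<le> vabs (inf (vabs (y n - l)) (vabs v))" for n
  proof -
    have "vabs (y n - l) = l - y n"
      using le[of n] by (simp add: vl.abs_minus_commute[of _ l] vl.abs_of_nonneg)
    moreover have "v \<le> l - y n"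
      using gap[of n] by (simp add: le_diff_eq add.commute)
    ultimately show ?thesis
      using \<open>0 \<le> v\<close> by (simp add: vl.abs_of_nonneg inf_absorb2)
  qed
  have "order_conv UNIV (\<le>) (\<lambda>n. inf (vabs (y n - l)) (vabs v)) 0"
    using uo unfolding uo_conv_def by blast
  then have "v \<le> 0"
    using bound by (rule order_conv_0_const_le_0[OF _ directed_UNIV_linorder])
  with \<open>0 \<le> v\<close> show "v = 0"
    by simp
qed

lemma countable_sup_property_if_increasing_nets_uo_conv:
  fixes \<tau> :: "'a::{ordered_real_vector,lattice} topology" and f :: "'a set \<Rightarrow> 'i"
  assumes olb: "o_lebesgue TYPE('i) \<tau>" and f: "inj f"
    and nets: "\<forall>(D :: 'i set) le x l. directed D le \<and> (\<forall>a\<in>D. 0 \<le> x a) \<and>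
      (\<forall>a\<in>D. \<forall>b\<in>D. le a b \<longrightarrow> x a \<le> x b) \<and> net_tendsto \<tau> D le x l \<longrightarrow>
      (\<exists>s. embedded_seq D le s \<and> uo_conv (UNIV :: nat set) (\<le>) (x \<circ> s) l)"
  shows "countable_sup_property TYPE('a)"
proof (rule countable_sup_property_if_Sup_fin_gaps_vanish)
  fix S :: "'a set" and m s0
  assume sup: "is_sup_of S m" and s0: "s0 \<in> S"
  define D where "D = f ` fin_subsets_containing S s0"
  define le where "le a b \<longleftrightarrow> inv f a \<subseteq> inv f b" for a b
  define x where "x a = Sup_fin (inv f a) - s0" for a
  have inv_D: "inv f a \<in> fin_subsets_containing S s0" if "a \<in> D" for a
    using that f unfolding D_def by auto
  have D_dir: "directed D le"
    unfolding D_def le_def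
    using directed_reindex[OF f] directed_fin_subsets_containing[OF s0] by blast
  have "order_conv (fin_subsets_containing S s0) (\<subseteq>) (\<lambda>F. Sup_fin F - s0) (m - s0)"
    using order_conv_Sup_fin[OF sup s0] unfolding order_conv_def by simp
  then have "order_conv D le x (m - s0)"
    unfolding D_def le_def x_def by (rule order_conv_reindex[OF f])
  then have "net_tendsto \<tau> D le x (m - s0)"
    using olb D_dir unfolding o_lebesgue_def by blast
  moreover have "\<forall>a\<in>D. 0 \<le> x a"
    using Sup_fin_ge_fin_subsets_containing[OF inv_D] by (simp add: x_def)
  moreover have "\<forall>a\<in>D. \<forall>b\<in>D. le a b \<longrightarrow> x a \<le> x b"
    using Sup_fin_mono_fin_subsets_containing[OF inv_D inv_D] by (simp add: x_def le_def)
  ultimately obtain s where s: "embedded_seq D le s"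
    "uo_conv (UNIV :: nat set) (\<le>) (x \<circ> s) (m - s0)"
    using nets[rule_format, of D le x "m - s0"] D_dir by blast
  define F where "F n = inv f (s n)" for n
  have F: "F n \<in> fin_subsets_containing S s0" for n
    using s(1) inv_D unfolding embedded_seq_def F_def by blast
  have gaps: "v = 0" if "0 \<le> v" and gap: "\<And>n. Sup_fin (F n) + v \<le> m" for v
  proof (rule uo_conv_gap_eq_0[OF s(2) _ \<open>0 \<le> v\<close>])
    show "(x \<circ> s) n \<le> m - s0" for n
      using Sup_fin_le_fin_subsets_containing[OF sup F] by (simp add: x_def F_def)
    show "(x \<circ> s) n + v \<le> m - s0" for n
      using gap[of n] by (simp add: x_def F_def algebra_simps)
  qed
  show "\<exists>F. (\<forall>n::nat. F n \<in> fin_subsets_containing S s0) \<and>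
      (\<forall>v. 0 \<le> v \<and> (\<forall>n. Sup_fin (F n) + v \<le> m) \<longrightarrow> v = 0)"
  proof (rule exI[where x = F], intro conjI allI impI)
    show "F n \<in> fin_subsets_containing S s0" for n
      by (rule F)
    show "v = 0" if "0 \<le> v \<and> (\<forall>n. Sup_fin (F n) + v \<le> m)" for v
      using that by (intro gaps) simp_all
  qed
qed

section \<open>Uo-null embedded sequences\<close>

definition eventual_upper_bounds :: "(nat \<Rightarrow> 'a::order) \<Rightarrow> 'a set" where
  "eventual_upper_bounds y = {b. \<exists>k. \<forall>n\<ge>k. y n \<le> b}"

lemma order_conv_0_if_eventual_upper_bounds:
  fixes y :: "nat \<Rightarrow> 'a::{ordered_real_vector,lattice}"
  assumes y: "\<And>n. 0 \<le> y n" "\<And>n. y n \<le> u"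
    and low: "\<And>p. 0 \<le> p \<Longrightarrow> (\<And>b. b \<in> eventual_upper_bounds y \<Longrightarrow> p \<le> b) \<Longrightarrow> p = 0"
  shows "order_conv UNIV (\<le>) y 0"
proof (rule order_convI[where Y = "eventual_upper_bounds y"])
  have pos: "0 \<le> b" if "b \<in> eventual_upper_bounds y" for b
    using that y(1) order_trans unfolding eventual_upper_bounds_def by blast
  show "eventual_upper_bounds y \<noteq> {}"
    using y(2) unfolding eventual_upper_bounds_def by blast
  show "\<exists>b\<in>eventual_upper_bounds y. b \<le> b1 \<and> b \<le> b2"
    if "b1 \<in> eventual_upper_bounds y" "b2 \<in> eventual_upper_bounds y" for b1 b2
  proof -
    from that obtain k1 k2 where "\<forall>n\<ge>k1. y n \<le> b1" "\<forall>n\<ge>k2. y n \<le> b2"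
      unfolding eventual_upper_bounds_def by blast
    then have "\<forall>n\<ge>max k1 k2. y n \<le> inf b1 b2"
      by simp
    then have "inf b1 b2 \<in> eventual_upper_bounds y"
      unfolding eventual_upper_bounds_def by blast
    then show ?thesis
      by (intro bexI[of _ "inf b1 b2"]) simp_all
  qed
  show "is_inf_of (eventual_upper_bounds y) 0"
    unfolding is_inf_of_def
  proof (intro conjI allI impI ballI)
    show "0 \<le> b" if "b \<in> eventual_upper_bounds y" for b
      using pos that .
    fix w
    assume "\<forall>b\<in>eventual_upper_bounds y. w \<le> b"
    then have "sup w 0 = 0"
      using pos by (intro low) simp_all
    then show "w \<le> 0"
      by (metis sup.cobounded1)
  qed
  show "net_eventually UNIV (\<le>) (\<lambda>n. vabs (y n - 0) \<le> b)" if "b \<in> eventual_upper_bounds y" for b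
    using that y(1) unfolding eventual_upper_bounds_def net_eventually_def
    by (auto simp: vl.abs_of_nonneg)
qed

lemma eventual_upper_bounds_lower_bound_disjoint:
  fixes z :: "nat \<Rightarrow> 'a::{ordered_real_vector,lattice}"
  assumes arch: "archimedean_vl TYPE('a)" and z: "\<And>n. 0 \<le> z n" and "0 \<le> u" "0 \<le> y"
    and disj: "\<And>n. inf (z n) y = 0" and "0 \<le> p"
    and low: "\<forall>b\<in>eventual_upper_bounds (\<lambda>n. inf (z n) u). p \<le> b"
  shows "inf p y = 0"
proof (rule archimedean_eq_0[OF arch])
  define t where "t = inf p y"
  show "0 \<le> inf p y"
    using \<open>0 \<le> p\<close> \<open>0 \<le> y\<close> by simp
  fix k
  show "real k *\<^sub>R inf p y \<le> u"
  proof (induction k)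
    case 0
    then show ?case
      using \<open>0 \<le> u\<close> by simp
  next
    case (Suc k)
    have "inf (z n) u + real k *\<^sub>R t \<le> u" for n
    proof -
      have "inf (inf (z n) u) (real k *\<^sub>R t) \<le> inf (z n) (real k *\<^sub>R y)"
        using \<open>0 \<le> y\<close> by (intro inf_mono) (simp_all add: t_def scaleR_left_mono)
      also have "\<dots> = 0"
        using disjoint_scaleR_nat[OF z \<open>0 \<le> y\<close> disj] .
      finally have "inf (inf (z n) u) (real k *\<^sub>R t) = 0"
        using z[of n] \<open>0 \<le> u\<close> \<open>0 \<le> p\<close> \<open>0 \<le> y\<close>
        by (intro order.antisym) (simp_all add: t_def scaleR_nonneg_nonneg)
      then have "inf (z n) u + real k *\<^sub>R t = sup (inf (z n) u) (real k *\<^sub>R t)"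
        using vl.add_eq_inf_sup[of "inf (z n) u" "real k *\<^sub>R t"] by simp
      also have "\<dots> \<le> u"
        using Suc.IH by (simp add: t_def)
      finally show ?thesis .
    qed
    then have "u - real k *\<^sub>R t \<in> eventual_upper_bounds (\<lambda>n. inf (z n) u)"
      unfolding eventual_upper_bounds_def by (simp add: le_diff_eq)
    then have "p \<le> u - real k *\<^sub>R t"
      using low by blast
    then have "p + real k *\<^sub>R t \<le> u"
      by (simp add: le_diff_eq)
    have "real (Suc k) *\<^sub>R t = t + real k *\<^sub>R t"
      by (simp add: algebra_simps)
    also have "\<dots> \<le> p + real k *\<^sub>R t"
      by (simp add: t_def)
    also have "\<dots> \<le> u"
      by fact
    finally show ?case
      by (simp only: t_def)
  qed
qed

lemma eventual_upper_bounds_lower_bound_gap: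
  fixes z :: "nat \<Rightarrow> 'a::{ordered_real_vector,lattice}"
  assumes arch: "archimedean_vl TYPE('a)" and z: "\<And>n. 0 \<le> z n" and "p \<le> u"
    and low: "\<forall>b\<in>eventual_upper_bounds (\<lambda>n. inf (z n) u). p \<le> b"
    and "0 \<le> r" and r: "\<And>n. k \<le> n \<Longrightarrow> r \<le> p - inf p (z n)"
  shows "r = 0"
proof (rule archimedean_inf_le_eq_0[OF arch _ \<open>0 \<le> r\<close>])
  show "0 \<le> u - p"
    using \<open>p \<le> u\<close> by simp
  fix c :: nat
  have "u - inf (u - p + r) (real c *\<^sub>R r) \<in> eventual_upper_bounds (\<lambda>n. inf (z n) u)"
    unfolding eventual_upper_bounds_def
    using inf_le_diff_inf_scaleR[OF z \<open>0 \<le> r\<close> \<open>p \<le> u\<close> r] by blast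
  then have "p \<le> u - inf (u - p + r) (real c *\<^sub>R r)"
    using low by blast
  then show "inf (u - p + r) (real c *\<^sub>R r) \<le> u - p"
    by (simp add: le_diff_eq add.commute)
qed

lemma order_conv_inf_tail_sums:
  fixes z :: "nat \<Rightarrow> 'a::{ordered_real_vector,lattice}"
  assumes arch: "archimedean_vl TYPE('a)" and z: "\<And>n. 0 \<le> z n" and "p \<le> u"
    and low: "\<forall>b\<in>eventual_upper_bounds (\<lambda>n. inf (z n) u). p \<le> b"
  shows "order_conv UNIV (\<le>) (\<lambda>d. inf p (\<Sum>i<d. z (k + i))) p"
proof -
  define s where "s d = (\<Sum>i<d. z (k + i))" for d
  have s_mono: "s d \<le> s d'" if "d \<le> d'" for d d'
    unfolding s_def using that z by (intro sum_mono2) auto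
  have z_le_s: "z (k + i) \<le> s (Suc i)" for i
    unfolding s_def using z by (simp add: sum_nonneg add_increasing)
  have "is_sup_of (range (\<lambda>d. inf p (s d))) p"
  proof (rule is_sup_of_if_gaps_vanish)
    show "inf p (s d) \<le> p" for d
      by simp
    fix v
    assume "0 \<le> v" and gap: "\<And>d. d \<in> UNIV \<Longrightarrow> inf p (s d) + v \<le> p"
    have "v \<le> p - inf p (z n)" if n_ge: "k \<le> n" for n
    proof -
      obtain i where n: "n = k + i"
        using le_Suc_ex[OF n_ge] by blast
      have "inf p (z n) + v \<le> inf p (s (Suc i)) + v"
        using z_le_s[of i] by (simp add: n inf.coboundedI2)
      also have "\<dots> \<le> p"
        using gap by simp
      finally show ?thesis
        by (simp add: le_diff_eq add.commute)
    qed
    then show "v = 0"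
      by (rule eventual_upper_bounds_lower_bound_gap[OF arch z \<open>p \<le> u\<close> low \<open>0 \<le> v\<close>])
  qed
  then show ?thesis
    using s_mono unfolding s_def
    by (intro order_conv_increasing[OF directed_UNIV_linorder]) (simp_all add: inf.coboundedI2)
qed

(* The tail sums of z beyond Suc j lie in W (Suc j), and their infima with p increase to p,
   so p is their tau-limit by the o-Lebesgue property. *)
lemma eventual_upper_bounds_lower_bound_mem_normal_solid_seq:
  fixes \<tau> :: "'a::{ordered_real_vector,lattice} topology" and f :: "'a set \<Rightarrow> 'i"
  assumes arch: "archimedean_vl TYPE('a)" and olb: "o_lebesgue TYPE('i) \<tau>" and f: "inj f"
    and W: "normal_solid_seq \<tau> W" and z: "\<And>n. 0 \<le> z n" "\<And>n. z n \<in> W n" and "0 \<le> u"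
    and "0 \<le> p" and low: "\<forall>b\<in>eventual_upper_bounds (\<lambda>n. inf (z n) u). p \<le> b"
  shows "p \<in> W j"
proof (cases "p = 0")
  case True
  then show ?thesis
    using normal_solid_seq_zero[OF W] by simp
next
  case False
  have lin: "linear_topology \<tau>"
    using olb by (intro locally_solid_linear_topology o_lebesgue_locally_solid)
  have "p \<le> u"
    using low unfolding eventual_upper_bounds_def by auto
  define s where "s d = (\<Sum>i<d. z (Suc (Suc j) + i))" for d
  have "order_conv UNIV (\<le>) (\<lambda>d. inf p (s d)) p"
    unfolding s_def by (rule order_conv_inf_tail_sums[OF arch z(1) \<open>p \<le> u\<close> low])
  moreover have "inj (\<lambda>n::nat. f {real n *\<^sub>R p})"
    using inj_compose[OF f, of "\<lambda>n::nat. {real n *\<^sub>R p}"] False by (simp add: inj_def o_def)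
  ultimately have "net_tendsto \<tau> UNIV (\<le>) (\<lambda>d. inf p (s d)) p"
    using o_lebesgue_net_tendsto[OF olb _ directed_UNIV_linorder] by blast
  moreover have "inf p (s d) \<in> W (Suc j)" for d
  proof (rule solidD[OF normal_solid_seq_solid[OF W]])
    show "s d \<in> W (Suc j)"
      unfolding s_def by (rule normal_solid_seq_sum_tail[OF W z(2)])
    show "vabs (inf p (s d)) \<le> vabs (s d)"
      using \<open>0 \<le> p\<close> z(1) by (simp add: s_def vl.abs_of_nonneg sum_nonneg)
  qed
  ultimately show ?thesis
    using net_tendsto_limit_mem[OF lin directed_UNIV_linorder _ W] by blast
qed

(* A positive lower bound of the eventual upper bounds lies in every W j and is disjoint
   from their intersection, hence vanishes. *)
lemma order_conv_inf_normal_solid_seq_disjoint: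
  fixes \<tau> :: "'a::{ordered_real_vector,lattice} topology" and f :: "'a set \<Rightarrow> 'i"
  assumes arch: "archimedean_vl TYPE('a)" and olb: "o_lebesgue TYPE('i) \<tau>" and f: "inj f"
    and W: "normal_solid_seq \<tau> W" and z: "\<And>n. 0 \<le> z n" "\<And>n. z n \<in> W n"
    and disj: "\<And>n. z n \<in> disj_compl (\<Inter>i. W i)" and "0 \<le> u"
  shows "order_conv UNIV (\<le>) (\<lambda>n. inf (z n) u) 0"
proof (rule order_conv_0_if_eventual_upper_bounds)
  show "0 \<le> inf (z n) u" "inf (z n) u \<le> u" for n
    using z(1) \<open>0 \<le> u\<close> by simp_all
  fix p
  assume "0 \<le> p" and "\<And>b. b \<in> eventual_upper_bounds (\<lambda>n. inf (z n) u) \<Longrightarrow> p \<le> b"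
  then have low: "\<forall>b\<in>eventual_upper_bounds (\<lambda>n. inf (z n) u). p \<le> b"
    by blast
  have "p \<in> W j" for j
    using eventual_upper_bounds_lower_bound_mem_normal_solid_seq
      [OF arch olb f W z \<open>0 \<le> u\<close> \<open>0 \<le> p\<close> low] .
  moreover have "inf (vabs p) (vabs y) = 0" if "y \<in> (\<Inter>i. W i)" for y
  proof -
    have "inf (z n) (vabs y) = 0" for n
      using disj[of n] that z(1)[of n] unfolding disj_compl_def by (simp add: vl.abs_of_nonneg)
    with \<open>0 \<le> p\<close> show ?thesis
      using eventual_upper_bounds_lower_bound_disjoint[OF arch z(1) \<open>0 \<le> u\<close> _ _ \<open>0 \<le> p\<close> low]
      by (simp add: vl.abs_of_nonneg)
  qed
  ultimately have "inf (vabs p) (vabs p) = 0"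
    by blast
  then show "p = 0"
    by simp
qed

lemma embedded_seq_step:
  fixes \<tau> :: "'a::{ordered_real_vector,lattice} topology" and z :: "'j \<Rightarrow> 'a"
  assumes C: "carrier_top \<tau> = UNIV" and D: "directed D le"
    and ev: "\<And>U. nbhd0 \<tau> U \<Longrightarrow> solid U \<Longrightarrow> net_eventually D le (\<lambda>a. z a \<in> U)"
    and "a \<in> D" and G: "normal_solid_seq \<tau> G"
  obtains a' G' where "a' \<in> D" "normal_solid_seq \<tau> G'" "z a' \<in> disj_compl (\<Inter>i. G' i)"
    "le a a'" "\<not> (\<exists>m\<in>D. \<forall>b\<in>D. le b m) \<longrightarrow> \<not> le a' a"
    "\<forall>b\<in>D. le a' b \<longrightarrow> z b \<in> G k" "\<forall>i. G' i \<subseteq> G i"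
proof -
  have "net_eventually D le (\<lambda>b. z b \<in> G k)"
    using ev normal_solid_seq_nbhd0[OF G] normal_solid_seq_solid[OF G] by blast
  then obtain a' where a': "a' \<in> D" "le a a'" "\<not> (\<exists>m\<in>D. \<forall>b\<in>D. le b m) \<longrightarrow> \<not> le a' a"
    "\<forall>b\<in>D. le a' b \<longrightarrow> z b \<in> G k"
    using net_eventually_beyond[OF D _ \<open>a \<in> D\<close>] by blast
  have "z a' \<in> carrier_top \<tau>"
    using C by simp
  then obtain V where V: "normal_solid_seq \<tau> V" "z a' \<in> disj_compl (\<Inter>i. V i)"
    unfolding carrier_top_iff by blast
  have "z a' \<in> disj_compl (\<Inter>i. G i \<inter> V i)"
    using V(2) disj_compl_antimono[of "\<Inter>i. G i \<inter> V i" "\<Inter>i. V i"] by blast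
  with a' show ?thesis
    using that[of a' "\<lambda>i. G i \<inter> V i"] normal_solid_seq_Int[OF G V(1)] by blast
qed

(* The n-th state pairs an index with a normal sequence G n whose intersection is disjoint
   from z at that index; G n decreases in n, and its diagonal controls the whole sequence. *)
lemma embedded_seq_normal_solid_seq_exists:
  fixes \<tau> :: "'a::{ordered_real_vector,lattice} topology" and z :: "'j \<Rightarrow> 'a"
  assumes C: "carrier_top \<tau> = UNIV" and D: "directed D le"
    and ev: "\<And>U. nbhd0 \<tau> U \<Longrightarrow> solid U \<Longrightarrow> net_eventually D le (\<lambda>a. z a \<in> U)"
  shows "\<exists>s W. embedded_seq D le s \<and> normal_solid_seq \<tau> W \<and> (\<forall>n. z (s n) \<in> W n) \<and>
    (\<forall>n. z (s n) \<in> disj_compl (\<Inter>i. W i))"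
proof -
  define P where "P = (\<lambda>(a, G). a \<in> D \<and> normal_solid_seq \<tau> G \<and> z a \<in> disj_compl (\<Inter>i. G i))"
  define Q where "Q n = (\<lambda>(a, G) (a', G'). le a a' \<and> (\<not> (\<exists>m\<in>D. \<forall>b\<in>D. le b m) \<longrightarrow> \<not> le a' a) \<and>
      (\<forall>b\<in>D. le a' b \<longrightarrow> z b \<in> G (Suc n)) \<and> (\<forall>i. G' i \<subseteq> G i))" for n :: nat
  have "\<exists>x. \<forall>n. P (x n) \<and> Q n (x n) (x (Suc n))"
  proof (rule dependent_nat_choice)
    obtain a where "a \<in> D"
      using D unfolding directed_def by blast
    moreover have "z a \<in> carrier_top \<tau>"
      using C by simp
    ultimately show "\<exists>x. P x"
      unfolding P_def carrier_top_iff by blast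
  next
    fix x n
    assume "P x"
    then obtain a G where x: "x = (a, G)" "a \<in> D" "normal_solid_seq \<tau> G"
      unfolding P_def by (cases x) auto
    obtain a' G' where "a' \<in> D" "normal_solid_seq \<tau> G'" "z a' \<in> disj_compl (\<Inter>i. G' i)"
      "le a a'" "\<not> (\<exists>m\<in>D. \<forall>b\<in>D. le b m) \<longrightarrow> \<not> le a' a"
      "\<forall>b\<in>D. le a' b \<longrightarrow> z b \<in> G (Suc n)" "\<forall>i. G' i \<subseteq> G i"
      by (rule embedded_seq_step[OF C D ev x(2,3), where k = "Suc n"])
    then have "P (a', G') \<and> Q n x (a', G')"
      unfolding P_def Q_def x(1) by blast
    then show "\<exists>y. P y \<and> Q n x y"
      by blast
  qed
  then obtain x where x: "\<forall>n. P (x n) \<and> Q n (x n) (x (Suc n))"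
    by blast
  define a G where "a n = fst (x n)" and "G n = snd (x n)" for n
  have PQ: "P (a n, G n)" "Q n (a n, G n) (a (Suc n), G (Suc n))" for n
    using x by (simp_all add: a_def G_def)
  have G: "normal_solid_seq \<tau> (G n)" and dec: "G (Suc n) i \<subseteq> G n i" for n i
    using PQ unfolding P_def Q_def by auto
  define s where "s n = a (Suc n)" for n
  define W where "W n = G n (Suc n)" for n
  have "embedded_seq D le s"
    using PQ unfolding embedded_seq_def s_def P_def Q_def by auto
  moreover have "normal_solid_seq \<tau> W"
    unfolding W_def using G dec by (rule normal_solid_seq_diagonal(1))
  moreover have "z (s n) \<in> W n" for n
    using PQ(1)[of "Suc n"] PQ(2)[of n] directed_refl[OF D]
    unfolding s_def W_def P_def Q_def by auto
  moreover have "z (s n) \<in> disj_compl (\<Inter>i. W i)" for n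
    using PQ(1)[of "Suc n"]
      disj_compl_antimono[OF normal_solid_seq_diagonal(2)[of \<tau> G, OF G dec, of "Suc n"]]
    unfolding s_def W_def P_def by auto
  ultimately show ?thesis
    by blast
qed

lemma uo_conv_embedded_seq_if_carrier_top_eq_UNIV:
  fixes \<tau> :: "'a::{ordered_real_vector,lattice} topology" and f :: "'a set \<Rightarrow> 'i"
    and x :: "'j \<Rightarrow> 'a"
  assumes arch: "archimedean_vl TYPE('a)" and olb: "o_lebesgue TYPE('i) \<tau>" and f: "inj f"
    and C: "carrier_top \<tau> = UNIV" and D: "directed D le" and x: "net_tendsto \<tau> D le x l"
  shows "\<exists>s. embedded_seq D le s \<and> uo_conv (UNIV :: nat set) (\<le>) (x \<circ> s) l"
proof -
  have lin: "linear_topology \<tau>"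
    using olb by (intro locally_solid_linear_topology o_lebesgue_locally_solid)
  have "net_eventually D le (\<lambda>a. vabs (x a - l) \<in> U)" if "nbhd0 \<tau> U" "solid U" for U
    using net_tendsto_eventually_diff_mem[OF lin x that(1)] solid_vabs_iff[OF that(2)]
    unfolding net_eventually_def by simp
  then obtain s W where s: "embedded_seq D le s" and W: "normal_solid_seq \<tau> W"
    and mem: "\<And>n. vabs (x (s n) - l) \<in> W n"
    and disj: "\<And>n. vabs (x (s n) - l) \<in> disj_compl (\<Inter>i. W i)"
    using embedded_seq_normal_solid_seq_exists[OF C D, of "\<lambda>a. vabs (x a - l)"] by blast
  have "order_conv UNIV (\<le>) (\<lambda>n. inf (vabs ((x \<circ> s) n - l)) (vabs u)) 0" for u
    using order_conv_inf_normal_solid_seq_disjoint[OF arch olb f W _ mem disj] by simp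
  with s show ?thesis
    unfolding uo_conv_def by blast
qed

theorem theorem5p6:
  fixes \<tau> :: "'a::{ordered_real_vector,lattice} topology"
  assumes arch: "archimedean_vl TYPE('a)"
    and lin: "linear_topology \<tau>"
    and ls: "locally_solid \<tau>"
    and olb: "o_lebesgue TYPE('i) \<tau>"
    and big: "\<exists>f :: 'a set \<Rightarrow> 'i. inj f"
  shows "(carrier_top \<tau> = UNIV \<longleftrightarrow> countable_sup_property TYPE('a)) \<and>
    (countable_sup_property TYPE('a) \<longleftrightarrow>
      (\<forall>(D :: 'i set) le x l. directed D le \<and> net_tendsto \<tau> D le x l \<longrightarrow>
         (\<exists>s. embedded_seq D le s \<and> uo_conv (UNIV :: nat set) (\<le>) (x \<circ> s) l))) \<and>
    (countable_sup_property TYPE('a) \<longleftrightarrow>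
      (\<forall>(D :: 'i set) le x l. directed D le \<and> (\<forall>a\<in>D. 0 \<le> x a) \<and>
         (\<forall>a\<in>D. \<forall>b\<in>D. le a b \<longrightarrow> x a \<le> x b) \<and> net_tendsto \<tau> D le x l \<longrightarrow>
         (\<exists>s. embedded_seq D le s \<and> uo_conv (UNIV :: nat set) (\<le>) (x \<circ> s) l)))"
proof -
  \<comment> \<open>lin and ls are implied by olb\<close>
  obtain f :: "'a set \<Rightarrow> 'i" where f: "inj f"
    using big by blast
  have carrier_iff_csp: "carrier_top \<tau> = UNIV \<longleftrightarrow> countable_sup_property TYPE('a)"
    using countable_sup_property_if_carrier_top_eq_UNIV[OF olb f]
      carrier_top_eq_UNIV_if_countable_sup_property[OF arch olb f] by blast
  have csp_nets: "\<exists>s. embedded_seq D le s \<and> uo_conv (UNIV :: nat set) (\<le>) (x \<circ> s) l"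
    if "countable_sup_property TYPE('a)" "directed D le" "net_tendsto \<tau> D le x l"
    for D :: "'i set" and le x l
    using carrier_iff_csp that
    by (intro uo_conv_embedded_seq_if_carrier_top_eq_UNIV[OF arch olb f]) simp_all
  show ?thesis
    apply (intro conjI iffI allI impI)
    subgoal using carrier_iff_csp by simp
    subgoal using carrier_iff_csp by simp
    subgoal premises prems using csp_nets prems by blast
    subgoal premises prems
      by (rule countable_sup_property_if_increasing_nets_uo_conv[OF olb f]) (use prems in blast)
    subgoal premises prems using csp_nets prems by blast
    subgoal premises prems by (rule countable_sup_property_if_increasing_nets_uo_conv[OF olb f prems])
    done
qed

end
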